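(* Let $n$ be a positive integer, $1\le k\le n$, $w\in\mathfrak S_n$. The map $\mathrm{Rev}_{n,k,w}:\mathcal B_w(n,k)\to\mathcal C_w(n,k+1)$, $[\rho]\mapsto\mathrm{Rev}_{n,k,w}(\rho)$, is a well-defined poset isomorphism, and its inverse sends $R\in\mathcal C_w(n,k+1)$ to the set $\mathscr L(\mathrm{Inv}_k(w),\le_R)$ of linear extensions of $(\mathrm{Inv}_k(w),\le_R)$ (which is a single commutation class).
   Context: $\mathfrak S_n$ is the symmetric group on $[n]$. For $m\ge0$, $\binom{[n]}{m}$ is the set of $m$-subsets of $[n]$ written $[x_1,\dots,x_m]$ with $x_1<\dots<x_m$; $X_i$ is $X$ with $x_i$ removed; $P(X)=\{X_1,\dots,X_m\}$ with lex order $(X_m,\dots,X_1)$ and antilex order $(X_1,\dots,X_m)$; a prefix is a set $\{X_m,\dots,X_i\}$, a suffix a set $\{X_i,\dots,X_1\}$ (empty set counts as both). $\mathrm{Inv}_m(w)=\{[x_1,\dots,x_m]\in\binom{[n]}{m}:w^{-1}(x_1)>\dots>w^{-1}(x_m)\}$. $X$ is an $m$-quasi-inversion if exactly one pair $[x_a,x_b]$, $a<b$, is not in $\mathrm{Inv}_2(w)$. Quasi-inversion relations on $\mathrm{Inv}_m(w)$: for a quasi-inversion $X\in\binom{[n]}{m+1}$ with $P(X)\cap\mathrm{Inv}_m(w)=\{X_i,X_{i+1}\}$, $X_i<X_{i+1}$ if $m-i$ is odd, $X_{i+1}<X_i$ if $m-i$ is even; $\mathcal P_w(n,m)$ is the reflexive-transitive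 closure on $\mathrm{Inv}_m(w)$. $\mathcal A_w(n,k)$: total orders $\rho$ of $\mathrm{Inv}_k(w)$ that are linear extensions of $\mathcal P_w(n,k)$ with $\rho|_{P(X)}$ lex or antilex for every $X\in\mathrm{Inv}_{k+1}(w)$. $\mathrm{Rev}_{n,k,w}(\rho)=\{X\in\mathrm{Inv}_{k+1}(w):\rho|_{P(X)}=(X_1,\dots,X_{k+1})\}$. Elements of $\mathrm{Inv}_k(w)$ commute if incomparable in $\mathcal P_w(n,k)$ and not both in some packet $P(Z)$, $Z\in\binom{[n]}{k+1}$; $\sim_w$ is generated by swapping adjacent commuting elements. For $X\in\mathrm{Inv}_{k+1}(w)$ whose packet occupies consecutive positions of $\rho$ in lex order, the lex-to-antilex packet flip reverses that block. $\mathcal B_w(n,k)$ is the poset on $\mathcal A_w(n,k)/\!\sim_w$ with $[\rho]\le[\sigma]$ iff $\sigma$ is obtained from $\rho$ by commutations and lex-to-antilex packet flips. $R\subseteq\mathrm{Inv}_{m}(w)$ is consistent if it is a lower ideal of $\mathcal P_w(n,m)$ and $P(X)\cap R$ is a prefix or suffix of $P(X)$ for all $X\in\mathrm{Inv}_{m+1}(w)$; $\mathcal C_w(n,m)$ is the set of consistent sets ordered by $R\le R'$ iff there is a chain of consistent sets $R=R_0\subset\dots\subset R_t=R'$ with $|R_{j+1}\setminus R_j|=1$. For $R\in\mathcal C_w(n,k+1)$, $G_R$ is the directed graph on $\mathrm{Inv}_k(w)$ with edges $X\to Y$ for each quasi-inversion relation $X<Y$ on $\mathrm{Inv}_k(w)$,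 $X_i\to X_{i+1}$ ($1\le i\le k$) for $X\in R$, and $X_{i+1}\to X_i$ ($1\le i\le k$) for $X\in\mathrm{Inv}_{k+1}(w)\setminus R$. $G_R$ is acyclic, and $\le_R$ denotes the partial order on $\mathrm{Inv}_k(w)$ given by its reflexive-transitive closure. *)

theory Defs
  imports "HOL-Combinatorics.Permutations"
begin

(* Subsets of [n] are finite sets of naturals; X_i = X with its i-th smallest element removed *)
definition del :: "nat set \<Rightarrow> nat \<Rightarrow> nat set" where
  "del X i = X - {sorted_list_of_set X ! (i - 1)}"

definition packet :: "nat set \<Rightarrow> nat set set" where
  "packet X = {X - {x} | x. x \<in> X}"

definition lexl :: "nat set \<Rightarrow> nat set list" where
  "lexl X = map (del X) (rev [1..<card X + 1])"

definition antilexl :: "nat set \<Rightarrow> nat set list" where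
  "antilexl X = map (del X) [1..<card X + 1]"

definition subs :: "nat \<Rightarrow> nat \<Rightarrow> nat set set" where
  "subs n m = {X. X \<subseteq> {1..n} \<and> card X = m}"

definition Inv :: "nat \<Rightarrow> (nat \<Rightarrow> nat) \<Rightarrow> nat \<Rightarrow> nat set set" where
  "Inv n w m = {X \<in> subs n m. \<forall>x\<in>X. \<forall>y\<in>X. x < y \<longrightarrow> inv w x > inv w y}"

definition quasi_inv :: "(nat \<Rightarrow> nat) \<Rightarrow> nat set \<Rightarrow> bool" where
  "quasi_inv w X = (card {(a, b). a \<in> X \<and> b \<in> X \<and> a < b \<and> inv w a < inv w b} = 1)"

definition qrel :: "nat \<Rightarrow> (nat \<Rightarrow> nat) \<Rightarrow> nat \<Rightarrow> (nat set \<times> nat set) set" where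
  "qrel n w m = {(A, B). \<exists>X i. X \<in> subs n (m + 1) \<and> quasi_inv w X \<and> 1 \<le> i \<and> i \<le> m \<and>
      packet X \<inter> Inv n w m = {del X i, del X (i + 1)} \<and>
      (if odd (m - i) then (A, B) = (del X i, del X (i + 1))
       else (A, B) = (del X (i + 1), del X i))}"

definition Pw :: "nat \<Rightarrow> (nat \<Rightarrow> nat) \<Rightarrow> nat \<Rightarrow> (nat set \<times> nat set) set" where
  "Pw n w m = (qrel n w m)\<^sup>* \<inter> (Inv n w m \<times> Inv n w m)"

definition is_linext :: "'a set \<Rightarrow> ('a \<times> 'a) set \<Rightarrow> 'a list \<Rightarrow> bool" where
  "is_linext S r \<rho> = (distinct \<rho> \<and> set \<rho> = S \<and>
     (\<forall>i<length \<rho>. \<forall>j<length \<rho>. (\<rho> ! i, \<rho> ! j) \<in> r \<longrightarrow> i \<le> j))"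

definition Aw :: "nat \<Rightarrow> (nat \<Rightarrow> nat) \<Rightarrow> nat \<Rightarrow> nat set list set" where
  "Aw n w k = {\<rho>. is_linext (Inv n w k) (Pw n w k) \<rho> \<and>
      (\<forall>X\<in>Inv n w (k + 1). filter (\<lambda>Y. Y \<in> packet X) \<rho> \<in> {lexl X, antilexl X})}"

definition Rev :: "nat \<Rightarrow> (nat \<Rightarrow> nat) \<Rightarrow> nat \<Rightarrow> nat set list \<Rightarrow> nat set set" where
  "Rev n w k \<rho> = {X \<in> Inv n w (k + 1). filter (\<lambda>Y. Y \<in> packet X) \<rho> = antilexl X}"

definition commute :: "nat \<Rightarrow> (nat \<Rightarrow> nat) \<Rightarrow> nat \<Rightarrow> nat set \<Rightarrow> nat set \<Rightarrow> bool" where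
  "commute n w k Y Z = (Y \<in> Inv n w k \<and> Z \<in> Inv n w k \<and>
      (Y, Z) \<notin> Pw n w k \<and> (Z, Y) \<notin> Pw n w k \<and>
      \<not> (\<exists>Z' \<in> subs n (k + 1). Y \<in> packet Z' \<and> Z \<in> packet Z'))"

definition swapstep :: "nat \<Rightarrow> (nat \<Rightarrow> nat) \<Rightarrow> nat \<Rightarrow> (nat set list \<times> nat set list) set" where
  "swapstep n w k = {(xs @ [a, b] @ ys, xs @ [b, a] @ ys) | xs a b ys. commute n w k a b}"

definition flipstep :: "nat \<Rightarrow> (nat \<Rightarrow> nat) \<Rightarrow> nat \<Rightarrow> (nat set list \<times> nat set list) set" where
  "flipstep n w k = {(xs @ lexl X @ ys, xs @ antilexl X @ ys) | xs X ys. X \<in> Inv n w (k + 1)}"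

definition simw :: "nat \<Rightarrow> (nat \<Rightarrow> nat) \<Rightarrow> nat \<Rightarrow> (nat set list \<times> nat set list) set" where
  "simw n w k = (swapstep n w k \<inter> (Aw n w k \<times> Aw n w k))\<^sup>*"

definition Bw :: "nat \<Rightarrow> (nat \<Rightarrow> nat) \<Rightarrow> nat \<Rightarrow> nat set list set set" where
  "Bw n w k = Aw n w k // simw n w k"

definition Bw_le :: "nat \<Rightarrow> (nat \<Rightarrow> nat) \<Rightarrow> nat \<Rightarrow> nat set list set \<Rightarrow> nat set list set \<Rightarrow> bool" where
  "Bw_le n w k c d = (\<exists>\<rho>\<in>c. \<exists>\<sigma>\<in>d.
      (\<rho>, \<sigma>) \<in> ((swapstep n w k \<union> flipstep n w k) \<inter> (Aw n w k \<times> Aw n w k))\<^sup>*)"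

(* prefix / suffix of P(X) (in lex order (X_m,...,X_1)); empty set is both *)
definition is_prefix :: "nat set \<Rightarrow> nat set set \<Rightarrow> bool" where
  "is_prefix X S = (\<exists>j. S = del X ` {i. j \<le> i \<and> 1 \<le> i \<and> i \<le> card X})"

definition is_suffix :: "nat set \<Rightarrow> nat set set \<Rightarrow> bool" where
  "is_suffix X S = (\<exists>j. S = del X ` {i. 1 \<le> i \<and> i \<le> j \<and> i \<le> card X})"

definition consistent :: "nat \<Rightarrow> (nat \<Rightarrow> nat) \<Rightarrow> nat \<Rightarrow> nat set set \<Rightarrow> bool" where
  "consistent n w m R = (R \<subseteq> Inv n w m \<and>
      (\<forall>X Y. (X, Y) \<in> Pw n w m \<and> Y \<in> R \<longrightarrow> X \<in> R) \<and>
      (\<forall>X\<in>Inv n w (m + 1). is_prefix X (packet X \<inter> R) \<or> is_suffix X (packet X \<inter> R)))"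

definition Cw :: "nat \<Rightarrow> (nat \<Rightarrow> nat) \<Rightarrow> nat \<Rightarrow> nat set set set" where
  "Cw n w m = {R. consistent n w m R}"

definition Cw_le :: "nat \<Rightarrow> (nat \<Rightarrow> nat) \<Rightarrow> nat \<Rightarrow> nat set set \<Rightarrow> nat set set \<Rightarrow> bool" where
  "Cw_le n w m R R' = (R \<in> Cw n w m \<and> R' \<in> Cw n w m \<and>
      (R, R') \<in> {(S, S'). S \<in> Cw n w m \<and> S' \<in> Cw n w m \<and> S \<subset> S' \<and> card (S' - S) = 1}\<^sup>*)"

definition GR :: "nat \<Rightarrow> (nat \<Rightarrow> nat) \<Rightarrow> nat \<Rightarrow> nat set set \<Rightarrow> (nat set \<times> nat set) set" where
  "GR n w k R = qrel n w k
     \<union> {(del X i, del X (i + 1)) | X i. X \<in> R \<and> 1 \<le> i \<and> i \<le> k}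
     \<union> {(del X (i + 1), del X i) | X i. X \<in> Inv n w (k + 1) - R \<and> 1 \<le> i \<and> i \<le> k}"

definition leR :: "nat \<Rightarrow> (nat \<Rightarrow> nat) \<Rightarrow> nat \<Rightarrow> nat set set \<Rightarrow> (nat set \<times> nat set) set" where
  "leR n w k R = (GR n w k R)\<^sup>* \<inter> (Inv n w k \<times> Inv n w k)"

definition Linext :: "nat \<Rightarrow> (nat \<Rightarrow> nat) \<Rightarrow> nat \<Rightarrow> nat set set \<Rightarrow> nat set list set" where
  "Linext n w k R = {\<rho>. is_linext (Inv n w k) (leR n w k R) \<rho>}"

definition RevB :: "nat \<Rightarrow> (nat \<Rightarrow> nat) \<Rightarrow> nat \<Rightarrow> nat set list set \<Rightarrow> nat set set" where
  "RevB n w k c = the_elem (Rev n w k ` c)"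

end

theory Submission
  imports Defs
begin

text \<open>\<open>Rev\<close> only depends on the relative order of the members of each packet, so commutations do not
  change it and a lex-to-antilex flip adds exactly one set. Conversely, for consistent \<open>R\<close> the graph
  \<open>G_R\<close> is acyclic, by induction on the ground set splitting off its least element. The linear
  extensions of \<open>\<le>\<^sub>R\<close> are then exactly the admissible orders \<open>\<rho>\<close> with \<open>Rev \<rho> = R\<close>; any two of them
  differ by swaps of adjacent incomparable, hence commuting, elements, and every admissible \<open>\<rho>\<close> is a
  linear extension of \<open>\<le>\<^bsub>Rev \<rho>\<^esub>\<close> because \<open>Rev \<rho>\<close> is consistent (a three-element argument). So the
  commutation classes are exactly the sets of linear extensions. For the order: if \<open>R\<close> and
  \<open>R \<union> {X}\<close> are consistent, the packet of \<open>X\<close> is convex in \<open>G_R\<close>, so some linear extension of \<open>\<le>\<^sub>R\<close>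
  contains it as a consecutive lex block, and flipping the block gives one of \<open>\<le>\<^bsub>R \<union> {X}\<^esub>\<close>.\<close>

section \<open>Ranks and packets\<close>

definition rank_in :: "nat set \<Rightarrow> nat \<Rightarrow> nat" where
  "rank_in X x = card {y\<in>X. y < x}"

lemma sorted_take_eq_less_nth:
  fixes xs :: "nat list"
  assumes "sorted_wrt (<) xs" "t < length xs"
  shows "{y \<in> set xs. y < xs ! t} = set (take t xs)"
proof (intro set_eqI iffI)
  fix y assume "y \<in> {y \<in> set xs. y < xs ! t}"
  then obtain s where s: "s < length xs" "xs ! s = y" "y < xs ! t" by (auto simp: in_set_conv_nth)
  have "s < t"
  proof (rule ccontr)
    assume "\<not> s < t"
    then have "xs ! t \<le> xs ! s"
      using sorted_wrt_nth_less[OF assms(1) _ s(1), of t] by (cases "t = s") auto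
    then show False using s by linarith
  qed
  then show "y \<in> set (take t xs)" using s by (auto simp: in_set_conv_nth)
next
  fix y assume "y \<in> set (take t xs)"
  then obtain s where "s < t" "xs ! s = y" using assms(2) by (auto simp: in_set_conv_nth)
  then show "y \<in> {y \<in> set xs. y < xs ! t}" using assms by (auto intro: sorted_wrt_nth_less)
qed

lemma rank_in_nth:
  assumes "finite X" "t < card X"
  shows "rank_in X (sorted_list_of_set X ! t) = t"
proof -
  let ?xs = "sorted_list_of_set X"
  have "{y\<in>X. y < ?xs ! t} = set (take t ?xs)"
    using sorted_take_eq_less_nth[of ?xs t] assms by simp
  then show ?thesis unfolding rank_in_def using assms by (simp add: distinct_card)
qed

lemma rank_in_less_card:
  assumes "finite X" "x \<in> X" shows "rank_in X x < card X"
  unfolding rank_in_def using assms by (intro psubset_card_mono) auto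

lemma sorted_list_of_set_nth_mem:
  "finite X \<Longrightarrow> t < card X \<Longrightarrow> sorted_list_of_set X ! t \<in> X"
  by (metis length_sorted_list_of_set nth_mem set_sorted_list_of_set)

lemma nth_rank_in:
  assumes "finite X" "x \<in> X"
  shows "sorted_list_of_set X ! rank_in X x = x"
proof -
  obtain t where t: "t < card X" "sorted_list_of_set X ! t = x"
    using assms by (metis in_set_conv_nth length_sorted_list_of_set set_sorted_list_of_set)
  then have "rank_in X x = t" using rank_in_nth[OF assms(1)] by blast
  then show ?thesis using t by simp
qed

lemma rank_in_strict_mono:
  assumes "finite X" "x \<in> X" "y \<in> X" "x < y"
  shows "rank_in X x < rank_in X y"
  unfolding rank_in_def using assms by (intro psubset_card_mono) auto

lemma rank_in_less_iff:
  assumes "finite X" "x \<in> X" "y \<in> X"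
  shows "rank_in X x < rank_in X y \<longleftrightarrow> x < y"
  using rank_in_strict_mono[OF assms] rank_in_strict_mono[OF assms(1,3,2)]
  by (metis less_asym nat_neq_iff)

lemma rank_in_le_iff:
  assumes "finite X" "x \<in> X" "y \<in> X"
  shows "rank_in X x \<le> rank_in X y \<longleftrightarrow> x \<le> y"
  using rank_in_less_iff[OF assms(1,3,2)] by (simp add: not_less[symmetric])

lemma del_Suc_rank_in:
  "finite X \<Longrightarrow> x \<in> X \<Longrightarrow> del X (Suc (rank_in X x)) = X - {x}"
  using nth_rank_in unfolding del_def by simp

lemma del_obtain_remove:
  assumes "finite X" "1 \<le> i" "i \<le> card X"
  obtains x where "x \<in> X" "del X i = X - {x}" "rank_in X x = i - 1"
proof -
  have "i - 1 < card X" using assms by simp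
  then show ?thesis
    using that sorted_list_of_set_nth_mem[OF assms(1)] rank_in_nth[OF assms(1)]
    unfolding del_def by blast
qed

lemma antilexl_conv:
  assumes "finite X"
  shows "antilexl X = map (\<lambda>x. X - {x}) (sorted_list_of_set X)"
proof -
  let ?xs = "sorted_list_of_set X"
  have "[1..<card X + 1] = map Suc [0..<card X]" by (simp add: map_Suc_upt)
  then have "antilexl X = map (\<lambda>x. X - {x}) (map (\<lambda>j. ?xs ! j) [0..<card X])"
    by (simp add: antilexl_def del_def)
  also have "map (\<lambda>j. ?xs ! j) [0..<card X] = ?xs"
    using map_nth[of ?xs] assms by simp
  finally show ?thesis .
qed

lemma lexl_rev: "lexl X = rev (antilexl X)"
  unfolding lexl_def antilexl_def by (simp add: rev_map)

lemma lexl_conv: "finite X \<Longrightarrow> lexl X = map (\<lambda>x. X - {x}) (rev (sorted_list_of_set X))"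
  using lexl_rev antilexl_conv by (simp add: rev_map)

lemma packet_conv: "packet X = (\<lambda>x. X - {x}) ` X"
  unfolding packet_def by auto

lemma inj_on_remove: "inj_on (\<lambda>x. X - {x}) X"
  unfolding inj_on_def by blast

section \<open>Inversion sets and the graph \<open>G_R\<close>\<close>

text \<open>The paper's objects over an arbitrary finite ground set \<open>S\<close> and an injective \<open>p\<close>; the theorem
  uses \<open>S = {1..n}\<close> and \<open>p = inv w\<close>. The generality is needed because acyclicity of \<open>G_R\<close> is proved
  by induction on \<open>S\<close>.\<close>

definition inverted :: "(nat \<Rightarrow> nat) \<Rightarrow> nat set \<Rightarrow> bool" where
  "inverted p X = (\<forall>x\<in>X. \<forall>y\<in>X. x < y \<longrightarrow> p y < p x)"

definition inv_sets :: "nat set \<Rightarrow> (nat \<Rightarrow> nat) \<Rightarrow> nat \<Rightarrow> nat set set" where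
  "inv_sets S p m = {X. X \<subseteq> S \<and> card X = m \<and> inverted p X}"

definition quasi_pair :: "(nat \<Rightarrow> nat) \<Rightarrow> nat set \<Rightarrow> nat \<Rightarrow> nat \<Rightarrow> bool" where
  "quasi_pair p Z u v = (u \<in> Z \<and> v \<in> Z \<and> u < v \<and> p u < p v \<and>
     inverted p (Z - {u}) \<and> inverted p (Z - {v}))"

definition quasi_rel :: "nat set \<Rightarrow> (nat \<Rightarrow> nat) \<Rightarrow> nat \<Rightarrow> (nat set \<times> nat set) set" where
  "quasi_rel S p m = {(A, B). \<exists>Z u v. Z \<subseteq> S \<and> card Z = Suc m \<and> quasi_pair p Z u v \<and>
     (if odd (m - Suc (rank_in Z u)) then (A, B) = (Z - {u}, Z - {v}) else (A, B) = (Z - {v}, Z - {u}))}"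

definition consecutive :: "nat set \<Rightarrow> nat \<Rightarrow> nat \<Rightarrow> bool" where
  "consecutive X x y = (x \<in> X \<and> y \<in> X \<and> x < y \<and> (\<forall>z\<in>X. \<not> (x < z \<and> z < y)))"

definition graph_rel :: "nat set \<Rightarrow> (nat \<Rightarrow> nat) \<Rightarrow> nat \<Rightarrow> nat set set \<Rightarrow> (nat set \<times> nat set) set" where
  "graph_rel S p k R = quasi_rel S p k
     \<union> {(X - {x}, X - {y}) | X x y. X \<in> R \<and> consecutive X x y}
     \<union> {(X - {y}, X - {x}) | X x y. X \<in> inv_sets S p (Suc k) - R \<and> consecutive X x y}"

definition up_or_down_closed :: "nat set \<Rightarrow> nat set \<Rightarrow> bool" where
  "up_or_down_closed X J =
     ((\<forall>x\<in>J. \<forall>y\<in>X. x \<le> y \<longrightarrow> y \<in> J) \<or> (\<forall>x\<in>J. \<forall>y\<in>X. y \<le> x \<longrightarrow> y \<in> J))"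

definition consistent_set :: "nat set \<Rightarrow> (nat \<Rightarrow> nat) \<Rightarrow> nat \<Rightarrow> nat set set \<Rightarrow> bool" where
  "consistent_set S p m R = (R \<subseteq> inv_sets S p m \<and>
     (\<forall>A B. (A, B) \<in> quasi_rel S p m \<longrightarrow> B \<in> R \<longrightarrow> A \<in> R) \<and>
     (\<forall>X\<in>inv_sets S p (Suc m). up_or_down_closed X {x\<in>X. X - {x} \<in> R}))"

lemma Inv_eq_inv_sets: "Inv n w m = inv_sets {1..n} (inv w) m"
  unfolding Inv_def inv_sets_def subs_def inverted_def by auto

lemma inv_setsD:
  assumes "X \<in> inv_sets S p m"
  shows "X \<subseteq> S" "card X = m" "inverted p X"
  using assms unfolding inv_sets_def by auto

lemma inv_sets_finite_member: "finite S \<Longrightarrow> X \<in> inv_sets S p m \<Longrightarrow> finite X"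
  unfolding inv_sets_def using finite_subset by blast

lemma finite_inv_sets: "finite S \<Longrightarrow> finite (inv_sets S p m)"
  unfolding inv_sets_def by (rule finite_subset[of _ "Pow S"]) auto

lemma inverted_subset: "inverted p X \<Longrightarrow> Y \<subseteq> X \<Longrightarrow> inverted p Y"
  unfolding inverted_def by blast

lemma inv_sets_remove:
  assumes "X \<in> inv_sets S p (Suc m)" "x \<in> X"
  shows "X - {x} \<in> inv_sets S p m"
  using assms inverted_subset[of p X] card.infinite[of X]
  unfolding inv_sets_def by fastforce

lemma noninversion_hits_removed:
  "inverted p (X - {u}) \<Longrightarrow> a \<in> X \<Longrightarrow> b \<in> X \<Longrightarrow> a < b \<Longrightarrow> p a < p b \<Longrightarrow> a = u \<or> b = u"
  unfolding inverted_def by (metis DiffI less_asym singletonD)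

lemma consecutive_iff_rank_in:
  assumes "finite X" "x \<in> X" "y \<in> X"
  shows "consecutive X x y \<longleftrightarrow> rank_in X y = Suc (rank_in X x)"
proof
  assume "consecutive X x y"
  then have "{z\<in>X. z < y} = insert x {z\<in>X. z < x}"
    unfolding consecutive_def by auto
  then show "rank_in X y = Suc (rank_in X x)" unfolding rank_in_def using assms by simp
next
  assume r: "rank_in X y = Suc (rank_in X x)"
  then have "x < y" using rank_in_less_iff[OF assms] by simp
  moreover have "\<not> (x < z \<and> z < y)" if "z \<in> X" for z
    using rank_in_less_iff[OF assms(1,2) that] rank_in_less_iff[OF assms(1) that assms(3)] r by auto
  ultimately show "consecutive X x y" unfolding consecutive_def using assms by auto
qed

lemma consecutive_sorted_nth:
  assumes "finite X" "Suc i < card X"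
  shows "consecutive X (sorted_list_of_set X ! i) (sorted_list_of_set X ! Suc i)"
  using consecutive_iff_rank_in[OF assms(1) sorted_list_of_set_nth_mem[OF assms(1)]
      sorted_list_of_set_nth_mem[OF assms(1)]] rank_in_nth[OF assms(1)] assms
  by simp

lemma del_consecutive:
  assumes "finite X" "card X = Suc k" "1 \<le> i" "i \<le> k"
  obtains x y where "consecutive X x y" "del X i = X - {x}" "del X (i + 1) = X - {y}"
    "rank_in X x = i - 1"
proof -
  obtain x where x: "x \<in> X" "del X i = X - {x}" "rank_in X x = i - 1"
    using del_obtain_remove[OF assms(1), of i] assms by auto
  obtain y where y: "y \<in> X" "del X (i + 1) = X - {y}" "rank_in X y = i"
    using del_obtain_remove[OF assms(1), of "i + 1"] assms by auto
  have "consecutive X x y" using consecutive_iff_rank_in[OF assms(1) x(1) y(1)] x y assms by simp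
  then show ?thesis using that x y by blast
qed

lemma consecutive_del:
  assumes "finite X" "card X = Suc k" "consecutive X x y"
  shows "1 \<le> Suc (rank_in X x)" "Suc (rank_in X x) \<le> k"
    "del X (Suc (rank_in X x)) = X - {x}" "del X (Suc (rank_in X x) + 1) = X - {y}"
proof -
  have xy: "x \<in> X" "y \<in> X" using assms(3) unfolding consecutive_def by auto
  have r: "rank_in X y = Suc (rank_in X x)"
    using consecutive_iff_rank_in[OF assms(1) xy] assms(3) by simp
  show "1 \<le> Suc (rank_in X x)" by simp
  show "Suc (rank_in X x) \<le> k" using rank_in_less_card[OF assms(1) xy(2)] assms(2) r by simp
  show "del X (Suc (rank_in X x)) = X - {x}" using del_Suc_rank_in[OF assms(1) xy(1)] .
  show "del X (Suc (rank_in X x) + 1) = X - {y}" using del_Suc_rank_in[OF assms(1) xy(2)] r by simp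
qed

lemma quasi_pair_consecutive:
  assumes "quasi_pair p Z u v"
  shows "consecutive Z u v"
proof -
  have "\<not> (u < z \<and> z < v)" if "z \<in> Z" for z
  proof
    assume "u < z \<and> z < v"
    then have "p v < p z" "p z < p u"
      using assms that unfolding quasi_pair_def inverted_def by auto
    then show False using assms unfolding quasi_pair_def by simp
  qed
  then show ?thesis using assms unfolding quasi_pair_def consecutive_def by auto
qed

lemma quasi_pair_noninversions:
  assumes "quasi_pair p Z u v"
  shows "{(a, b). a \<in> Z \<and> b \<in> Z \<and> a < b \<and> p a < p b} = {(u, v)}"
proof -
  have "(a, b) = (u, v)" if "a \<in> Z" "b \<in> Z" "a < b" "p a < p b" for a b
    using noninversion_hits_removed[of p Z u a b] noninversion_hits_removed[of p Z v a b] assms that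
    unfolding quasi_pair_def by auto
  then show ?thesis using assms unfolding quasi_pair_def by auto
qed

lemma quasi_pair_remove_inverted_iff:
  assumes "quasi_pair p Z u v" "x \<in> Z"
  shows "inverted p (Z - {x}) \<longleftrightarrow> x = u \<or> x = v"
  using assms noninversion_hits_removed[of p Z x u v] unfolding quasi_pair_def by auto

lemma quasi_relI:
  assumes "Z \<subseteq> S" "card Z = Suc k" "quasi_pair p Z u v"
    "(odd (k - Suc (rank_in Z u)) \<and> U = Z - {u} \<and> V = Z - {v})
      \<or> (even (k - Suc (rank_in Z u)) \<and> U = Z - {v} \<and> V = Z - {u})"
  shows "(U, V) \<in> quasi_rel S p k"
  unfolding quasi_rel_def using assms by auto

lemma quasi_relE:
  assumes "(U, V) \<in> quasi_rel S p k"
  obtains Z u v where "Z \<subseteq> S" "card Z = Suc k" "quasi_pair p Z u v"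
    "(odd (k - Suc (rank_in Z u)) \<and> U = Z - {u} \<and> V = Z - {v})
      \<or> (even (k - Suc (rank_in Z u)) \<and> U = Z - {v} \<and> V = Z - {u})"
  using assms unfolding quasi_rel_def by (auto split: if_splits)

lemma quasi_rel_inv_sets:
  assumes "(A, B) \<in> quasi_rel S p m"
  shows "A \<in> inv_sets S p m" "B \<in> inv_sets S p m"
proof -
  obtain Z u v where Z: "Z \<subseteq> S" "card Z = Suc m" "quasi_pair p Z u v"
    "(A, B) = (Z - {u}, Z - {v}) \<or> (A, B) = (Z - {v}, Z - {u})"
    using assms by (elim quasi_relE) auto
  have "finite Z" using Z(2) by (metis card.infinite nat.distinct(1))
  then have "Z - {u} \<in> inv_sets S p m" "Z - {v} \<in> inv_sets S p m"
    using Z unfolding inv_sets_def quasi_pair_def by auto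
  then show "A \<in> inv_sets S p m" "B \<in> inv_sets S p m" using Z(4) by auto
qed

lemma qrel_subset_quasi_rel: "qrel n w m \<subseteq> quasi_rel {1..n} (inv w) m"
proof clarify
  fix A B assume "(A, B) \<in> qrel n w m"
  then obtain X i where X: "X \<in> subs n (m + 1)" "quasi_inv w X" "1 \<le> i" "i \<le> m"
     "packet X \<inter> Inv n w m = {del X i, del X (i + 1)}"
     "if odd (m - i) then (A, B) = (del X i, del X (i + 1)) else (A, B) = (del X (i + 1), del X i)"
    unfolding qrel_def by (simp only: mem_Collect_eq case_prod_conv) blast
  have fin: "finite X" and cX: "card X = Suc m" and XS: "X \<subseteq> {1..n}"
    using X(1) unfolding subs_def by (auto intro: finite_subset)
  obtain u v where uv: "consecutive X u v" "del X i = X - {u}" "del X (i + 1) = X - {v}"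
    "rank_in X u = i - 1"
    using del_consecutive[OF fin cX X(3,4)] .
  have "del X i \<in> Inv n w m" "del X (i + 1) \<in> Inv n w m" using X(5) by blast+
  then have inv_uv: "inverted (inv w) (X - {u})" "inverted (inv w) (X - {v})"
    using uv(2,3) unfolding Inv_eq_inv_sets inv_sets_def by auto
  obtain a b where ab: "a \<in> X" "b \<in> X" "a < b" "inv w a < inv w b"
  proof -
    obtain q where "{(a, b). a \<in> X \<and> b \<in> X \<and> a < b \<and> inv w a < inv w b} = {q}"
      using X(2) card_1_singletonE unfolding quasi_inv_def by blast
    then show ?thesis using that by (cases q) auto
  qed
  have "u < v" using uv(1) unfolding consecutive_def by blast
  then have "a = u" "b = v"
    using noninversion_hits_removed[OF inv_uv(1) ab] noninversion_hits_removed[OF inv_uv(2) ab] ab(3)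
    by auto
  then have qp: "quasi_pair (inv w) X u v"
    using uv(1) inv_uv ab unfolding quasi_pair_def consecutive_def by auto
  have "Suc (rank_in X u) = i" using uv(4) X(3) by simp
  then have "if odd (m - Suc (rank_in X u)) then (A, B) = (X - {u}, X - {v})
      else (A, B) = (X - {v}, X - {u})"
    using X(6) unfolding uv(2,3) by simp
  then show "(A, B) \<in> quasi_rel {1..n} (inv w) m"
    unfolding quasi_rel_def mem_Collect_eq case_prod_conv using XS cX qp by blast
qed

lemma quasi_rel_subset_qrel: "quasi_rel {1..n} (inv w) m \<subseteq> qrel n w m"
proof clarify
  fix A B assume "(A, B) \<in> quasi_rel {1..n} (inv w) m"
  then obtain Z u v where Z: "Z \<subseteq> {1..n}" "card Z = Suc m" "quasi_pair (inv w) Z u v"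
    "if odd (m - Suc (rank_in Z u)) then (A, B) = (Z - {u}, Z - {v}) else (A, B) = (Z - {v}, Z - {u})"
    unfolding quasi_rel_def by (simp only: mem_Collect_eq case_prod_conv) blast
  have fin: "finite Z" using Z(1) finite_subset by blast
  let ?i = "Suc (rank_in Z u)"
  note i = consecutive_del[OF fin Z(2) quasi_pair_consecutive[OF Z(3)]]
  have "Z \<in> subs n (m + 1)" using Z unfolding subs_def by auto
  moreover have "quasi_inv w Z" unfolding quasi_inv_def using quasi_pair_noninversions[OF Z(3)] by simp
  moreover have "packet Z \<inter> Inv n w m = {del Z ?i, del Z (?i + 1)}"
  proof -
    have "Z - {x} \<in> Inv n w m \<longleftrightarrow> x = u \<or> x = v" if "x \<in> Z" for x
      using quasi_pair_remove_inverted_iff[OF Z(3) that] Z(1,2) fin that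
      unfolding Inv_eq_inv_sets inv_sets_def by auto
    then show ?thesis unfolding packet_conv i(3,4) using Z(3) unfolding quasi_pair_def by blast
  qed
  moreover have "if odd (m - ?i) then (A, B) = (del Z ?i, del Z (?i + 1))
      else (A, B) = (del Z (?i + 1), del Z ?i)"
    using Z(4) unfolding i(3,4) .
  ultimately show "(A, B) \<in> qrel n w m"
    unfolding qrel_def mem_Collect_eq case_prod_conv using i(1,2) by blast
qed

lemma qrel_eq_quasi_rel: "qrel n w m = quasi_rel {1..n} (inv w) m"
  using qrel_subset_quasi_rel quasi_rel_subset_qrel by blast

lemma Pw_eq_quasi_rel:
  "Pw n w m = (quasi_rel {1..n} (inv w) m)\<^sup>* \<inter> (Inv n w m \<times> Inv n w m)"
  unfolding Pw_def qrel_eq_quasi_rel ..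

lemma del_pairs_eq_consecutive_pairs:
  assumes "\<And>X. X \<in> F \<Longrightarrow> finite X \<and> card X = Suc k"
  shows "{(del X i, del X (i + 1)) | X i. X \<in> F \<and> 1 \<le> i \<and> i \<le> k}
       = {(X - {x}, X - {y}) | X x y. X \<in> F \<and> consecutive X x y}"
proof (intro set_eqI iffI)
  fix e assume "e \<in> {(del X i, del X (i + 1)) | X i. X \<in> F \<and> 1 \<le> i \<and> i \<le> k}"
  then obtain X i where h: "e = (del X i, del X (i + 1))" "X \<in> F" "1 \<le> i" "i \<le> k" by blast
  have X: "finite X" "card X = Suc k" using assms[OF h(2)] by auto
  obtain x y where "consecutive X x y" "del X i = X - {x}" "del X (i + 1) = X - {y}"
    "rank_in X x = i - 1"
    using del_consecutive[OF X h(3,4)] .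
  then show "e \<in> {(X - {x}, X - {y}) | X x y. X \<in> F \<and> consecutive X x y}" using h by blast
next
  fix e assume "e \<in> {(X - {x}, X - {y}) | X x y. X \<in> F \<and> consecutive X x y}"
  then obtain X x y where h: "e = (X - {x}, X - {y})" "X \<in> F" "consecutive X x y" by blast
  have "finite X" "card X = Suc k" using assms[OF h(2)] by auto
  note i = consecutive_del[OF this h(3)]
  have "e = (del X (Suc (rank_in X x)), del X (Suc (rank_in X x) + 1))"
    unfolding h(1) i(3,4) ..
  then show "e \<in> {(del X i, del X (i + 1)) | X i. X \<in> F \<and> 1 \<le> i \<and> i \<le> k}"
    using h(2) i(1,2) by blast
qed

lemma GR_eq_graph_rel:
  assumes "R \<subseteq> Inv n w (k + 1)"
  shows "GR n w k R = graph_rel {1..n} (inv w) k R"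
proof -
  have fin: "finite X \<and> card X = Suc k" if "X \<in> Inv n w (k + 1)" for X
    using that unfolding Inv_eq_inv_sets inv_sets_def by (auto intro: finite_subset)
  have swap: "{(del X (i + 1), del X i) | X i. P X i} = converse {(del X i, del X (i + 1)) | X i. P X i}"
    "{(X - {y}, X - {x}) | X x y. Q X x y} = converse {(X - {x}, X - {y}) | X x y. Q X x y}"
    for P Q by auto
  have "{(del X i, del X (i + 1)) | X i. X \<in> R \<and> 1 \<le> i \<and> i \<le> k}
      = {(X - {x}, X - {y}) | X x y. X \<in> R \<and> consecutive X x y}"
    using assms fin by (intro del_pairs_eq_consecutive_pairs) blast
  moreover have "{(del X i, del X (i + 1)) | X i. X \<in> Inv n w (k + 1) - R \<and> 1 \<le> i \<and> i \<le> k}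
      = {(X - {x}, X - {y}) | X x y. X \<in> Inv n w (k + 1) - R \<and> consecutive X x y}"
    using fin by (intro del_pairs_eq_consecutive_pairs) blast
  ultimately show ?thesis
    unfolding GR_def graph_rel_def swap qrel_eq_quasi_rel Inv_eq_inv_sets[symmetric] by simp
qed

lemma upper_set_iff:
  assumes "finite X" "J \<subseteq> X"
  shows "(\<exists>j. J = {x\<in>X. j \<le> Suc (rank_in X x)}) \<longleftrightarrow> (\<forall>x\<in>J. \<forall>y\<in>X. x \<le> y \<longrightarrow> y \<in> J)"
proof
  assume "\<exists>j. J = {x\<in>X. j \<le> Suc (rank_in X x)}"
  then obtain j where j: "J = {x\<in>X. j \<le> Suc (rank_in X x)}" by blast
  show "\<forall>x\<in>J. \<forall>y\<in>X. x \<le> y \<longrightarrow> y \<in> J"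
  proof (intro ballI impI)
    fix x y assume "x \<in> J" "y \<in> X" "x \<le> y"
    then show "y \<in> J" using j rank_in_le_iff[OF assms(1), of x y] by auto
  qed
next
  assume up: "\<forall>x\<in>J. \<forall>y\<in>X. x \<le> y \<longrightarrow> y \<in> J"
  show "\<exists>j. J = {x\<in>X. j \<le> Suc (rank_in X x)}"
  proof (cases "J = {}")
    case True
    then show ?thesis using rank_in_less_card[OF assms(1)]
      by (intro exI[of _ "Suc (card X)"]) force
  next
    case False
    have fJ: "finite J" using assms finite_subset by blast
    let ?m = "Min J"
    have mJ: "?m \<in> J" using Min_in[OF fJ False] .
    have "J = {x\<in>X. Suc (rank_in X ?m) \<le> Suc (rank_in X x)}"
    proof (intro set_eqI iffI)
      fix x assume "x \<in> J"
      then show "x \<in> {x\<in>X. Suc (rank_in X ?m) \<le> Suc (rank_in X x)}"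
        using Min_le[OF fJ] rank_in_le_iff[OF assms(1)] assms(2) mJ by auto
    next
      fix x assume "x \<in> {x\<in>X. Suc (rank_in X ?m) \<le> Suc (rank_in X x)}"
      then show "x \<in> J" using up mJ rank_in_le_iff[OF assms(1)] assms(2) by auto
    qed
    then show ?thesis by blast
  qed
qed

lemma lower_set_iff:
  assumes "finite X" "J \<subseteq> X"
  shows "(\<exists>j. J = {x\<in>X. Suc (rank_in X x) \<le> j}) \<longleftrightarrow> (\<forall>x\<in>J. \<forall>y\<in>X. y \<le> x \<longrightarrow> y \<in> J)"
proof
  assume "\<exists>j. J = {x\<in>X. Suc (rank_in X x) \<le> j}"
  then obtain j where j: "J = {x\<in>X. Suc (rank_in X x) \<le> j}" by blast
  show "\<forall>x\<in>J. \<forall>y\<in>X. y \<le> x \<longrightarrow> y \<in> J"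
  proof (intro ballI impI)
    fix x y assume "x \<in> J" "y \<in> X" "y \<le> x"
    then show "y \<in> J" using j rank_in_le_iff[OF assms(1), of y x] by auto
  qed
next
  assume dn: "\<forall>x\<in>J. \<forall>y\<in>X. y \<le> x \<longrightarrow> y \<in> J"
  show "\<exists>j. J = {x\<in>X. Suc (rank_in X x) \<le> j}"
  proof (cases "J = {}")
    case True
    then show ?thesis by (intro exI[of _ 0]) auto
  next
    case False
    have fJ: "finite J" using assms finite_subset by blast
    let ?m = "Max J"
    have mJ: "?m \<in> J" using Max_in[OF fJ False] .
    have "J = {x\<in>X. Suc (rank_in X x) \<le> Suc (rank_in X ?m)}"
    proof (intro set_eqI iffI)
      fix x assume "x \<in> J"
      then show "x \<in> {x\<in>X. Suc (rank_in X x) \<le> Suc (rank_in X ?m)}"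
        using Max_ge[OF fJ] rank_in_le_iff[OF assms(1)] assms(2) mJ by auto
    next
      fix x assume "x \<in> {x\<in>X. Suc (rank_in X x) \<le> Suc (rank_in X ?m)}"
      then show "x \<in> J" using dn mJ rank_in_le_iff[OF assms(1)] assms(2) by auto
    qed
    then show ?thesis by blast
  qed
qed

lemma del_image_conv:
  assumes "finite X"
  shows "del X ` {i. 1 \<le> i \<and> i \<le> card X \<and> P i} = (\<lambda>x. X - {x}) ` {x\<in>X. P (Suc (rank_in X x))}"
proof (intro set_eqI iffI)
  fix Y assume "Y \<in> del X ` {i. 1 \<le> i \<and> i \<le> card X \<and> P i}"
  then obtain i where i: "Y = del X i" "1 \<le> i" "i \<le> card X" "P i" by blast
  obtain x where "x \<in> X" "del X i = X - {x}" "rank_in X x = i - 1"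
    using del_obtain_remove[OF assms i(2,3)] .
  then show "Y \<in> (\<lambda>x. X - {x}) ` {x\<in>X. P (Suc (rank_in X x))}" using i by auto
next
  fix Y assume "Y \<in> (\<lambda>x. X - {x}) ` {x\<in>X. P (Suc (rank_in X x))}"
  then obtain x where x: "Y = X - {x}" "x \<in> X" "P (Suc (rank_in X x))" by blast
  then show "Y \<in> del X ` {i. 1 \<le> i \<and> i \<le> card X \<and> P i}"
    using del_Suc_rank_in[OF assms x(2)] rank_in_less_card[OF assms x(2)]
    by (intro image_eqI[of _ _ "Suc (rank_in X x)"]) auto
qed

lemma packet_Int_conv: "packet X \<inter> R = (\<lambda>x. X - {x}) ` {x\<in>X. X - {x} \<in> R}"
  unfolding packet_conv by auto

lemma is_prefix_packet_iff:
  assumes "finite X"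
  shows "is_prefix X (packet X \<inter> R) \<longleftrightarrow> (\<exists>j. {x\<in>X. X - {x} \<in> R} = {x\<in>X. j \<le> Suc (rank_in X x)})"
proof -
  have reorder: "{i. j \<le> i \<and> 1 \<le> i \<and> i \<le> card X} = {i. 1 \<le> i \<and> i \<le> card X \<and> j \<le> i}"
    for j by auto
  show ?thesis
    unfolding is_prefix_def packet_Int_conv reorder del_image_conv[OF assms]
    by (simp add: inj_on_image_eq_iff[OF inj_on_remove])
qed

lemma is_suffix_packet_iff:
  assumes "finite X"
  shows "is_suffix X (packet X \<inter> R) \<longleftrightarrow> (\<exists>j. {x\<in>X. X - {x} \<in> R} = {x\<in>X. Suc (rank_in X x) \<le> j})"
proof -
  have reorder: "{i. 1 \<le> i \<and> i \<le> j \<and> i \<le> card X} = {i. 1 \<le> i \<and> i \<le> card X \<and> i \<le> j}"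
    for j by auto
  show ?thesis
    unfolding is_suffix_def packet_Int_conv reorder del_image_conv[OF assms]
    by (simp add: inj_on_image_eq_iff[OF inj_on_remove])
qed

lemma lower_closed_rtrancl_iff:
  assumes "r \<subseteq> A \<times> A"
  shows "(\<forall>x y. (x, y) \<in> r\<^sup>* \<inter> A \<times> A \<and> y \<in> R \<longrightarrow> x \<in> R) \<longleftrightarrow> (\<forall>x y. (x, y) \<in> r \<longrightarrow> y \<in> R \<longrightarrow> x \<in> R)"
proof
  assume step: "\<forall>x y. (x, y) \<in> r \<longrightarrow> y \<in> R \<longrightarrow> x \<in> R"
  have "x \<in> R" if "(x, y) \<in> r\<^sup>*" "y \<in> R" for x y
    using that(1) by (induction rule: converse_rtrancl_induct) (use that(2) step in auto)
  then show "\<forall>x y. (x, y) \<in> r\<^sup>* \<inter> A \<times> A \<and> y \<in> R \<longrightarrow> x \<in> R" by blast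
qed (use assms in blast)

lemma consistent_eq_consistent_set: "consistent n w m R \<longleftrightarrow> consistent_set {1..n} (inv w) m R"
proof -
  have "quasi_rel {1..n} (inv w) m \<subseteq> Inv n w m \<times> Inv n w m"
    by (auto simp: Inv_eq_inv_sets dest: quasi_rel_inv_sets)
  note lower = lower_closed_rtrancl_iff[OF this, of R]
  have packets: "(\<forall>X\<in>Inv n w (m + 1). is_prefix X (packet X \<inter> R) \<or> is_suffix X (packet X \<inter> R))
      \<longleftrightarrow> (\<forall>X\<in>Inv n w (m + 1). up_or_down_closed X {x\<in>X. X - {x} \<in> R})"
  proof (intro ball_cong refl)
    fix X assume "X \<in> Inv n w (m + 1)"
    then have fin: "finite X" unfolding Inv_eq_inv_sets using inv_sets_finite_member by blast
    show "is_prefix X (packet X \<inter> R) \<or> is_suffix X (packet X \<inter> R)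
        \<longleftrightarrow> up_or_down_closed X {x\<in>X. X - {x} \<in> R}"
      unfolding is_prefix_packet_iff[OF fin] is_suffix_packet_iff[OF fin] up_or_down_closed_def
      using upper_set_iff[OF fin, of "{x\<in>X. X - {x} \<in> R}"] lower_set_iff[OF fin, of "{x\<in>X. X - {x} \<in> R}"]
      by blast
  qed
  show ?thesis
    unfolding consistent_def Pw_eq_quasi_rel lower packets
    unfolding consistent_set_def Inv_eq_inv_sets by simp
qed

lemma inv_sets_mono: "S' \<subseteq> S \<Longrightarrow> inv_sets S' p m \<subseteq> inv_sets S p m"
  unfolding inv_sets_def by blast

lemma quasi_rel_mono: "S' \<subseteq> S \<Longrightarrow> quasi_rel S' p m \<subseteq> quasi_rel S p m"
  unfolding quasi_rel_def by blast

lemma inverted_insert_min: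
  assumes "\<forall>y\<in>Y. e < y"
  shows "inverted p (insert e Y) \<longleftrightarrow> inverted p Y \<and> (\<forall>y\<in>Y. p y < p e)"
proof
  assume "inverted p Y \<and> (\<forall>y\<in>Y. p y < p e)"
  moreover have "y \<in> Y" if "x \<in> insert e Y" "y \<in> insert e Y" "x < y" for x y
    using assms that by (metis insertE less_asym)
  ultimately show "inverted p (insert e Y)" unfolding inverted_def by blast
qed (use assms in \<open>auto simp: inverted_def\<close>)

lemma rank_in_insert_min:
  assumes "finite Y" "\<forall>z\<in>Y. e < z" "y \<in> Y"
  shows "rank_in (insert e Y) y = Suc (rank_in Y y)"
proof -
  have "{z \<in> insert e Y. z < y} = insert e {z\<in>Y. z < y}" using assms by auto
  moreover have "e \<notin> {z\<in>Y. z < y}" using assms by auto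
  ultimately show ?thesis unfolding rank_in_def using assms by simp
qed

lemma rank_in_min: "\<forall>z\<in>Y. e < z \<Longrightarrow> rank_in (insert e Y) e = 0"
  unfolding rank_in_def by auto

lemma rank_in_remove_greater:
  assumes "finite Z" "c \<in> Z" "u < c"
  shows "rank_in (Z - {c}) u = rank_in Z u"
proof -
  have "{z\<in>Z - {c}. z < u} = {z\<in>Z. z < u}" using assms by auto
  then show ?thesis unfolding rank_in_def by simp
qed

lemma rank_in_remove_less:
  assumes "finite Z" "c \<in> Z" "c < u"
  shows "rank_in (Z - {c}) u = rank_in Z u - 1"
proof -
  have "{z\<in>Z - {c}. z < u} = {z\<in>Z. z < u} - {c}" using assms by auto
  moreover have "c \<in> {z\<in>Z. z < u}" using assms by auto
  ultimately show ?thesis unfolding rank_in_def using assms(1) by simp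
qed

lemma odd_rank_remove_third:
  assumes "finite Z" "card Z = Suc (Suc k)" "consecutive Z u v" "c \<in> Z" "c \<noteq> u" "c \<noteq> v"
  shows "odd (k - Suc (rank_in (Z - {c}) u)) \<longleftrightarrow> (odd (Suc k - Suc (rank_in Z u)) \<longleftrightarrow> c < u)"
proof -
  have uv: "u \<in> Z" "v \<in> Z" "u < v" and rv: "rank_in Z v = Suc (rank_in Z u)"
    using assms(3) consecutive_iff_rank_in[OF assms(1)] unfolding consecutive_def by auto
  show ?thesis
  proof (cases "c < u")
    case True
    then have "rank_in (Z - {c}) u = rank_in Z u - 1" "0 < rank_in Z u"
      using rank_in_remove_less[OF assms(1,4)] rank_in_strict_mono[OF assms(1,4) uv(1)] by auto
    then show ?thesis using True by simp
  next
    case False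
    then have "v < c" using assms(3-6) unfolding consecutive_def by auto
    then have "rank_in (Z - {c}) u = rank_in Z u" "rank_in Z u < k"
      using rank_in_remove_greater[OF assms(1,4)] uv rv rank_in_strict_mono[OF assms(1) uv(2) assms(4)]
        rank_in_less_card[OF assms(1,4)] assms(2) by auto
    then show ?thesis using False by (simp add: Suc_diff_Suc)
  qed
qed

lemma consecutive_insert_min:
  "\<forall>z\<in>Y. e < z \<Longrightarrow> x \<noteq> e \<Longrightarrow> y \<noteq> e \<Longrightarrow> consecutive (insert e Y) x y \<longleftrightarrow> consecutive Y x y"
  unfolding consecutive_def by auto

lemma up_or_down_closed_remove:
  "up_or_down_closed (insert e X) J \<Longrightarrow> e \<notin> X \<Longrightarrow> up_or_down_closed X (J - {e})"
  unfolding up_or_down_closed_def by blast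

lemma graph_relI_quasi: "(U, V) \<in> quasi_rel S p k \<Longrightarrow> (U, V) \<in> graph_rel S p k R"
  unfolding graph_rel_def by blast

lemma graph_relI_in: "X \<in> R \<Longrightarrow> consecutive X x y \<Longrightarrow> (X - {x}, X - {y}) \<in> graph_rel S p k R"
  unfolding graph_rel_def by blast

lemma graph_relI_notin:
  "X \<in> inv_sets S p (Suc k) \<Longrightarrow> X \<notin> R \<Longrightarrow> consecutive X x y \<Longrightarrow> (X - {y}, X - {x}) \<in> graph_rel S p k R"
  unfolding graph_rel_def by blast

lemma graph_rel_cases:
  assumes "(U, V) \<in> graph_rel S p k R"
  obtains (q) Z u v where "Z \<subseteq> S" "card Z = Suc k" "quasi_pair p Z u v"
      "(odd (k - Suc (rank_in Z u)) \<and> U = Z - {u} \<and> V = Z - {v})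
        \<or> (even (k - Suc (rank_in Z u)) \<and> U = Z - {v} \<and> V = Z - {u})"
  | (r) X x y where "X \<in> R" "consecutive X x y" "U = X - {x}" "V = X - {y}"
  | (n) X x y where "X \<in> inv_sets S p (Suc k)" "X \<notin> R" "consecutive X x y" "U = X - {y}" "V = X - {x}"
  using assms unfolding graph_rel_def
proof (elim UnE)
  assume "(U, V) \<in> quasi_rel S p k"
  then show thesis using q by (elim quasi_relE) blast
qed blast+

lemma graph_rel_inv_sets:
  assumes "R \<subseteq> inv_sets S p (Suc k)" "(U, V) \<in> graph_rel S p k R"
  shows "U \<in> inv_sets S p k \<and> V \<in> inv_sets S p k"
  using assms(2)
proof (cases rule: graph_rel_cases)
  case (q Z u v)
  then have "(U, V) \<in> quasi_rel S p k" by (intro quasi_relI)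
  then show ?thesis using quasi_rel_inv_sets by blast
next
  case (r X x y)
  then show ?thesis using assms(1) inv_sets_remove unfolding consecutive_def by blast
next
  case (n X x y)
  then show ?thesis using inv_sets_remove unfolding consecutive_def by blast
qed

section \<open>Acyclicity of \<open>G_R\<close>\<close>

text \<open>Splitting off the least element \<open>e\<close> of the ground set: the sets avoiding \<open>e\<close> carry the graph
  of \<open>R0\<close> on \<open>S0\<close>, the sets containing \<open>e\<close> that of \<open>R1\<close> on \<open>T\<close> one level lower, and both ground sets
  are smaller.\<close>

locale min_split =
  fixes S :: "nat set" and p :: "nat \<Rightarrow> nat" and k' :: nat and R :: "nat set set"
  assumes finS: "finite S" and inj_p: "inj_on p S" and neS: "S \<noteq> {}"
    and cons: "consistent_set S p (Suc (Suc k')) R"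
begin

definition e :: nat where "e = Min S"
definition S0 :: "nat set" where "S0 = S - {e}"
definition T :: "nat set" where "T = {y\<in>S. p y < p e}"
definition R0 :: "nat set set" where "R0 = {X\<in>R. e \<notin> X}"
definition R1 :: "nat set set" where "R1 = (\<lambda>X. X - {e}) ` {X\<in>R. e \<in> X}"
text \<open>The parity of \<open>k'\<close> enters because \<open>e\<close> is the least element of every set containing it, so the
  orientation of a quasi-inversion relation between a set avoiding \<open>e\<close> and one containing \<open>e\<close> depends
  only on \<open>k'\<close>.\<close>

definition Before :: "nat set set" where "Before = {Y. (Y \<subseteq> T \<and> insert e Y \<in> R) \<or> (even (Suc k') \<and> \<not> Y \<subseteq> T)}"

lemma e_in_S: "e \<in> S" unfolding e_def using finS neS by simp

lemma e_le: "y \<in> S \<Longrightarrow> e \<le> y" unfolding e_def using finS by simp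

lemma e_less: "y \<in> S \<Longrightarrow> y \<noteq> e \<Longrightarrow> e < y" using e_le by (simp add: le_neq_implies_less)

lemma T_subset_S0: "T \<subseteq> S0" unfolding T_def S0_def by auto

lemma e_notin_T: "e \<notin> T" unfolding T_def by simp

lemma S0_subset_S: "S0 \<subseteq> S" unfolding S0_def by auto

lemma finite_S0: "finite S0" using finS S0_subset_S finite_subset by blast

lemma finite_T: "finite T" using finite_S0 T_subset_S0 finite_subset by blast

lemma p_e_less_outside_T: "y \<in> S0 \<Longrightarrow> y \<notin> T \<Longrightarrow> p e < p y"
proof -
  assume a: "y \<in> S0" "y \<notin> T"
  then have "y \<in> S" "y \<noteq> e" unfolding S0_def by auto
  then have "p y \<noteq> p e" using inj_p e_in_S unfolding inj_on_def by blast
  moreover have "\<not> p y < p e" using a \<open>y \<in> S\<close> unfolding T_def by auto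
  ultimately show ?thesis by simp
qed

lemma p_less_e_in_T: "y \<in> T \<Longrightarrow> p y < p e" unfolding T_def by simp

lemma R_subset: "R \<subseteq> inv_sets S p (Suc (Suc k'))" using cons unfolding consistent_set_def by simp

lemma R_lower_closed: "(A, B) \<in> quasi_rel S p (Suc (Suc k')) \<Longrightarrow> B \<in> R \<Longrightarrow> A \<in> R"
  using cons unfolding consistent_set_def by blast

lemma R_up_or_down_closed: "X \<in> inv_sets S p (Suc (Suc (Suc k'))) \<Longrightarrow> up_or_down_closed X {x\<in>X. X - {x} \<in> R}"
  using cons unfolding consistent_set_def by blast

lemma e_less_S0: "Y \<subseteq> S0 \<Longrightarrow> \<forall>y\<in>Y. e < y"
  using e_less unfolding S0_def by blast

lemma quasi_rel_insert_e:
  assumes "(A, B) \<in> quasi_rel T p m"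
  shows "(insert e A, insert e B) \<in> quasi_rel S p (Suc m)"
proof -
  obtain Z u v where Z: "Z \<subseteq> T" "card Z = Suc m" "quasi_pair p Z u v"
    "(odd (m - Suc (rank_in Z u)) \<and> A = Z - {u} \<and> B = Z - {v})
      \<or> (even (m - Suc (rank_in Z u)) \<and> A = Z - {v} \<and> B = Z - {u})"
    using assms by (rule quasi_relE)
  have finZ: "finite Z" using Z(1) finite_T finite_subset by blast
  have mn: "\<forall>z\<in>Z. e < z" using e_less_S0 Z(1) T_subset_S0 by blast
  have uv: "u \<in> Z" "v \<in> Z" "u \<noteq> e" "v \<noteq> e" using Z(3) mn unfolding quasi_pair_def by auto
  let ?Z = "insert e Z"
  have d: "?Z - {u} = insert e (Z - {u})" "?Z - {v} = insert e (Z - {v})" using uv by auto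
  have "\<forall>y\<in>Z. p y < p e" using Z(1) p_less_e_in_T by blast
  then have qp: "quasi_pair p ?Z u v"
    using Z(3) mn inverted_insert_min[of "Z - {u}" e p] inverted_insert_min[of "Z - {v}" e p]
    unfolding quasi_pair_def d by auto
  have sZ: "?Z \<subseteq> S" using Z(1) T_subset_S0 S0_subset_S e_in_S by blast
  have cZ: "card ?Z = Suc (Suc m)" using Z(2) finZ mn by auto
  have rank_u: "rank_in ?Z u = Suc (rank_in Z u)" using rank_in_insert_min[OF finZ mn uv(1)] .
  show ?thesis by (rule quasi_relI[OF sZ cZ qp]) (use Z(4) d rank_u in auto)
qed

lemma quasi_rel_swap_min:
  assumes "X \<subseteq> S0" "card X = Suc (Suc k')" "inverted p X" "x \<in> X" "\<forall>z\<in>X. x \<le> z"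
    "p e < p x" "\<forall>y\<in>X - {x}. p y < p e"
  shows "(odd (Suc k') \<longrightarrow> (X, insert e (X - {x})) \<in> quasi_rel S p (Suc (Suc k'))) \<and>
         (even (Suc k') \<longrightarrow> (insert e (X - {x}), X) \<in> quasi_rel S p (Suc (Suc k')))"
proof -
  let ?Z = "insert e X"
  have finX: "finite X" using assms(1) finite_S0 finite_subset by blast
  have mn: "\<forall>z\<in>X. e < z" using e_less_S0 assms(1) by blast
  have eX: "e \<notin> X" using mn by auto
  have d: "?Z - {e} = X" "?Z - {x} = insert e (X - {x})" using eX mn assms(4) by auto
  have "inverted p (insert e (X - {x}))"
    using inverted_insert_min[of "X - {x}" e p] mn assms inverted_subset[OF assms(3)] by auto
  then have qp: "quasi_pair p ?Z e x" unfolding quasi_pair_def using d assms mn by auto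
  have cZ: "card ?Z = Suc (Suc (Suc k'))" using assms(2) finX eX by simp
  have sZ: "?Z \<subseteq> S" using assms(1) S0_subset_S e_in_S by blast
  have rank_e: "rank_in ?Z e = 0" using rank_in_min[OF mn] .
  show ?thesis
    using quasi_relI[OF sZ cZ qp, of X "insert e (X - {x})"] quasi_relI[OF sZ cZ qp, of "insert e (X - {x})" X]
    unfolding rank_e d by auto
qed

lemma remove_e_subset_T:
  assumes "X \<subseteq> S" "inverted p X" "e \<in> X"
  shows "X - {e} \<subseteq> T"
proof
  fix y assume y: "y \<in> X - {e}"
  then have "y \<in> S" "e < y" using assms e_less by auto
  then have "p y < p e" using assms y unfolding inverted_def by blast
  then show "y \<in> T" unfolding T_def using \<open>y \<in> S\<close> by simp
qed

lemma inv_sets_avoiding_e: "Y \<in> inv_sets S p m \<Longrightarrow> e \<notin> Y \<Longrightarrow> Y \<in> inv_sets S0 p m"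
  unfolding inv_sets_def S0_def by auto

lemma inv_sets_remove_e:
  assumes "Y \<in> inv_sets S p (Suc m)" "e \<in> Y"
  shows "Y - {e} \<in> inv_sets T p m"
  using remove_e_subset_T[OF inv_setsD(1,3)[OF assms(1)] assms(2)] inv_sets_remove[OF assms]
  unfolding inv_sets_def by auto

lemma insert_e_inv_sets:
  assumes "X \<subseteq> T" "X \<in> inv_sets S p (Suc (Suc k'))"
  shows "insert e X \<in> inv_sets S p (Suc (Suc (Suc k')))" "insert e X - {e} = X"
    "\<And>z. z \<in> X \<Longrightarrow> insert e X - {z} = insert e (X - {z})"
proof -
  have mn: "\<forall>z\<in>X. e < z" using e_less_S0 assms(1) T_subset_S0 by blast
  have eX: "e \<notin> X" using mn by auto
  have "inverted p (insert e X)" using inverted_insert_min[of X e p] mn inv_setsD(3)[OF assms(2)] assms(1) p_less_e_in_T by blast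
  then show "insert e X \<in> inv_sets S p (Suc (Suc (Suc k')))"
    using inv_setsD[OF assms(2)] inv_sets_finite_member[OF finS assms(2)] eX e_in_S
    unfolding inv_sets_def by auto
  show "insert e X - {e} = X" using eX by auto
  show "\<And>z. z \<in> X \<Longrightarrow> insert e X - {z} = insert e (X - {z})" using eX by auto
qed

lemma consistent_R0: "consistent_set S0 p (Suc (Suc k')) R0"
  unfolding consistent_set_def
proof (intro conjI allI impI ballI)
  show "R0 \<subseteq> inv_sets S0 p (Suc (Suc k'))"
    using R_subset unfolding R0_def inv_sets_def S0_def by blast
next
  fix A B assume "(A, B) \<in> quasi_rel S0 p (Suc (Suc k'))" "B \<in> R0"
  moreover have "A \<in> inv_sets S0 p (Suc (Suc k'))" using quasi_rel_inv_sets(1) calculation(1) .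
  ultimately show "A \<in> R0" using R_lower_closed quasi_rel_mono[OF S0_subset_S] unfolding R0_def inv_sets_def S0_def by blast
next
  fix X assume X: "X \<in> inv_sets S0 p (Suc (Suc (Suc k')))"
  then have "X \<in> inv_sets S p (Suc (Suc (Suc k')))" using inv_sets_mono[OF S0_subset_S] by blast
  moreover have "e \<notin> X" using X unfolding inv_sets_def S0_def by blast
  then have "{x\<in>X. X - {x} \<in> R0} = {x\<in>X. X - {x} \<in> R}" unfolding R0_def by auto
  ultimately show "up_or_down_closed X {x\<in>X. X - {x} \<in> R0}" using R_up_or_down_closed by simp
qed

lemma R1_iff:
  assumes "e \<notin> Y"
  shows "Y \<in> R1 \<longleftrightarrow> insert e Y \<in> R"
proof
  assume "Y \<in> R1"
  then obtain X where "X \<in> R" "e \<in> X" "Y = X - {e}" unfolding R1_def by blast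
  then have "insert e Y = X" by auto
  then show "insert e Y \<in> R" using \<open>X \<in> R\<close> by simp
next
  assume "insert e Y \<in> R"
  then show "Y \<in> R1" unfolding R1_def using assms by (intro image_eqI[of _ _ "insert e Y"]) auto
qed

lemma consistent_R1: "consistent_set T p (Suc k') R1"
  unfolding consistent_set_def
proof (intro conjI allI impI ballI)
  show "R1 \<subseteq> inv_sets T p (Suc k')" unfolding R1_def using inv_sets_remove_e R_subset by blast
next
  fix A B assume ab: "(A, B) \<in> quasi_rel T p (Suc k')" "B \<in> R1"
  have "e \<notin> B" "e \<notin> A" using quasi_rel_inv_sets[OF ab(1)] e_notin_T unfolding inv_sets_def by auto
  then have "insert e B \<in> R" using R1_iff ab(2) by simp
  then have "insert e A \<in> R" using R_lower_closed[OF quasi_rel_insert_e[OF ab(1)]] by simp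
  then show "A \<in> R1" using R1_iff \<open>e \<notin> A\<close> by simp
next
  fix X assume X: "X \<in> inv_sets T p (Suc (Suc k'))"
  have "T \<subseteq> S" using T_subset_S0 S0_subset_S by blast
  then have XT: "X \<subseteq> T" and XS: "X \<in> inv_sets S p (Suc (Suc k'))"
    using inv_setsD(1)[OF X] inv_sets_mono X by blast+
  note h = insert_e_inv_sets[OF XT XS]
  have eX: "e \<notin> X" using XT e_notin_T by blast
  have "X - {x} \<in> R1 \<longleftrightarrow> insert e X - {x} \<in> R" if "x \<in> X" for x
    using R1_iff[of "X - {x}"] h(3)[OF that] eX by simp
  then have "{x\<in>X. X - {x} \<in> R1} = {x\<in>insert e X. insert e X - {x} \<in> R} - {e}" using eX by auto
  then show "up_or_down_closed X {x\<in>X. X - {x} \<in> R1}"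
    using up_or_down_closed_remove[OF R_up_or_down_closed[OF h(1)] eX] by simp
qed

lemma rank_in_e: "Z \<subseteq> S \<Longrightarrow> rank_in Z e = 0"
  unfolding rank_in_def using e_le by fastforce

lemma edge_avoiding_e:
  assumes "(U, V) \<in> graph_rel S p (Suc k') R" "e \<notin> U" "e \<notin> V"
  shows "(U, V) \<in> graph_rel S0 p (Suc k') R0"
  using assms(1)
proof (cases rule: graph_rel_cases)
  case (q Z u v)
  have "u \<noteq> v" using q(3) unfolding quasi_pair_def by simp
  then have "Z = U \<union> V" using q(4) q(3) unfolding quasi_pair_def by auto
  then have "Z \<subseteq> S0" using q(1) assms unfolding S0_def by auto
  then have "(U, V) \<in> quasi_rel S0 p (Suc k')" by (rule quasi_relI[OF _ q(2,3,4)])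
  then show ?thesis by (rule graph_relI_quasi)
next
  case (r X x y)
  have "X = U \<union> V" using r unfolding consecutive_def by auto
  then have "X \<in> R0" using r assms unfolding R0_def by auto
  then show ?thesis using r graph_relI_in by blast
next
  case (n X x y)
  have "X = U \<union> V" using n unfolding consecutive_def by auto
  then have "e \<notin> X" using assms by auto
  then have "X \<in> inv_sets S0 p (Suc (Suc k'))" "X \<notin> R0"
    using n unfolding inv_sets_def S0_def R0_def by auto
  then show ?thesis using n graph_relI_notin by blast
qed

lemma quasi_rel_remove_e:
  assumes "(U, V) \<in> quasi_rel S p (Suc k')" "e \<in> U" "e \<in> V"
  shows "(U - {e}, V - {e}) \<in> quasi_rel T p k'"
proof -
  obtain Z u v where q: "Z \<subseteq> S" "card Z = Suc (Suc k')" "quasi_pair p Z u v"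
    "(odd (Suc k' - Suc (rank_in Z u)) \<and> U = Z - {u} \<and> V = Z - {v})
      \<or> (even (Suc k' - Suc (rank_in Z u)) \<and> U = Z - {v} \<and> V = Z - {u})"
    using assms(1) by (rule quasi_relE)
  have uv: "u \<in> Z" "v \<in> Z" "u < v" "p u < p v" "inverted p (Z - {u})" "inverted p (Z - {v})"
    using q(3) unfolding quasi_pair_def by auto
  have ne: "e \<noteq> u" "e \<noteq> v" "e \<in> Z" using q(4) assms by auto
  define Z' where "Z' = Z - {e}"
  have finZ: "finite Z" using q(1) finS finite_subset by blast
  have finZ': "finite Z'" unfolding Z'_def using finZ by simp
  have ZS0: "Z' \<subseteq> S0" using q(1) unfolding S0_def Z'_def by auto
  have mn: "\<forall>z\<in>Z'. e < z" using e_less_S0[OF ZS0] .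
  have Zi: "Z = insert e Z'" using ne unfolding Z'_def by auto
  have eZ': "e \<notin> Z'" unfolding Z'_def by simp
  have u': "u \<in> Z'" "v \<in> Z'" using uv ne unfolding Z'_def by auto
  have d: "Z - {u} = insert e (Z' - {u})" "Z - {v} = insert e (Z' - {v})" using ne Zi by auto
  have i1: "inverted p (Z' - {u}) \<and> (\<forall>y\<in>Z' - {u}. p y < p e)"
    using inverted_insert_min[of "Z' - {u}" e p] mn uv(5) d(1) by auto
  have i2: "inverted p (Z' - {v}) \<and> (\<forall>y\<in>Z' - {v}. p y < p e)"
    using inverted_insert_min[of "Z' - {v}" e p] mn uv(6) d(2) by auto
  have ZT: "Z' \<subseteq> T"
  proof
    fix z assume z: "z \<in> Z'"
    then have "p z < p e" using i1 i2 uv(3) by (cases "z = u") auto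
    then show "z \<in> T" using z q(1) unfolding T_def Z'_def by auto
  qed
  have qp: "quasi_pair p Z' u v" unfolding quasi_pair_def using uv u' i1 i2 by auto
  have cZ: "card Z' = Suc k'" using q(2) finZ' eZ' Zi by simp
  have rank_eq: "rank_in Z u = Suc (rank_in Z' u)" unfolding Zi using rank_in_insert_min[OF finZ' mn u'(1)] .
  have par: "Suc k' - Suc (rank_in Z u) = k' - Suc (rank_in Z' u)" using rank_eq by simp
  have "(odd (k' - Suc (rank_in Z' u)) \<and> U - {e} = Z' - {u} \<and> V - {e} = Z' - {v}) \<or>
        (even (k' - Suc (rank_in Z' u)) \<and> U - {e} = Z' - {v} \<and> V - {e} = Z' - {u})"
    using q(4) unfolding par Z'_def by auto
  then show ?thesis by (rule quasi_relI[OF ZT cZ qp])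
qed

lemma edge_containing_e:
  assumes "(U, V) \<in> graph_rel S p (Suc k') R" "e \<in> U" "e \<in> V"
  shows "(U - {e}, V - {e}) \<in> graph_rel T p k' R1"
  using assms(1)
proof (cases rule: graph_rel_cases)
  case (q Z u v)
  show ?thesis by (rule graph_relI_quasi[OF quasi_rel_remove_e[OF quasi_relI[OF q] assms(2,3)]])
next
  case (r X x y)
  have XI: "X \<in> inv_sets S p (Suc (Suc k'))" using R_subset r(1) by blast
  have ne: "x \<noteq> e" "y \<noteq> e" "e \<in> X" using r assms by auto
  let ?X = "X - {e}"
  have "insert e ?X = X" using ne by auto
  then have "?X \<in> R1" using R1_iff[of ?X] r(1) by simp
  moreover have "consecutive ?X x y"
    using consecutive_insert_min[of ?X e x y] ne e_less_S0[of ?X] r(2) inv_setsD[OF XI] \<open>insert e ?X = X\<close>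
    unfolding S0_def by auto
  moreover have "U - {e} = ?X - {x}" "V - {e} = ?X - {y}" using r by auto
  ultimately show ?thesis using graph_relI_in[of ?X R1 x y] by simp
next
  case (n X x y)
  have ne: "x \<noteq> e" "y \<noteq> e" "e \<in> X" using n assms by auto
  let ?X = "X - {e}"
  have ins: "insert e ?X = X" using ne by auto
  then have "?X \<notin> R1" using R1_iff[of ?X] n(2) by simp
  moreover have "?X \<in> inv_sets T p (Suc k')"
    using inv_setsD[OF n(1)] remove_e_subset_T[of X] ne inverted_subset[of p X ?X] unfolding inv_sets_def by auto
  moreover have "consecutive ?X x y"
    using consecutive_insert_min[of ?X e x y] ne e_less_S0[of ?X] n(3) inv_setsD[OF n(1)] ins
    unfolding S0_def by auto
  moreover have "U - {e} = ?X - {y}" "V - {e} = ?X - {x}" using n by auto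
  ultimately show ?thesis using graph_relI_notin[of ?X T p k' R1 x y] by simp
qed

lemma edge_into_e:
  assumes "(U, V) \<in> graph_rel S p (Suc k') R" "e \<notin> U" "e \<in> V"
  shows "U \<in> Before"
  using assms(1)
proof (cases rule: graph_rel_cases)
  case (q Z u v)
  have uv: "u \<in> Z" "v \<in> Z" "u < v" "p u < p v" using q(3) unfolding quasi_pair_def by auto
  have eZ: "e \<in> Z" using q(4) assms by auto
  show ?thesis
  proof (cases "U = Z - {u}")
    case True
    then have ue: "u = e" using eZ assms by auto
    then have "U = Z - {u} \<and> V = Z - {v}" using q(4) True uv by auto
    then have "odd (Suc k' - Suc (rank_in Z u))" using q(4) uv by auto
    then have ev: "even (Suc k')" using rank_in_e[OF q(1)] ue by simp
    have "v \<in> U" using True uv by auto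
    moreover have "v \<notin> T" using uv ue unfolding T_def by auto
    ultimately show ?thesis unfolding Before_def using ev by auto
  next
    case False
    then have "U = Z - {v}" using q(4) by auto
    then have "v = e" using eZ assms by auto
    then show ?thesis using uv e_le q(1) by force
  qed
next
  case (r X x y)
  have XI: "X \<in> inv_sets S p (Suc (Suc k'))" using R_subset r(1) by blast
  have "e \<in> X" using r assms by auto
  then have xe: "x = e" using r assms by auto
  have "U \<subseteq> T" using remove_e_subset_T[of X] inv_setsD[OF XI] \<open>e \<in> X\<close> r xe by auto
  moreover have "insert e U = X" using r xe \<open>e \<in> X\<close> by auto
  ultimately show ?thesis using r(1) unfolding Before_def by auto
next
  case (n X x y)
  have "e \<in> X" using n assms by auto
  then have "y = e" using n assms by auto
  moreover have "x \<in> S" "x < y" using n inv_setsD[OF n(1)] unfolding consecutive_def by auto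
  ultimately show ?thesis using e_le by force
qed

lemma edge_out_of_e:
  assumes "(U, V) \<in> graph_rel S p (Suc k') R" "e \<in> U" "e \<notin> V"
  shows "V \<notin> Before"
  using assms(1)
proof (cases rule: graph_rel_cases)
  case (q Z u v)
  have uv: "u \<in> Z" "v \<in> Z" "u < v" "p u < p v" using q(3) unfolding quasi_pair_def by auto
  have eZ: "e \<in> Z" using q(4) assms by auto
  show ?thesis
  proof (cases "V = Z - {v}")
    case True
    then have "v = e" using eZ assms by auto
    then show ?thesis using uv e_le q(1) by force
  next
    case False
    then have VU: "V = Z - {u}" "U = Z - {v}" using q(4) by auto
    then have ue: "u = e" using eZ assms by auto
    have "even (Suc k' - Suc (rank_in Z u))" using q(4) False by auto
    then have od: "odd (Suc k')" using rank_in_e[OF q(1)] ue by simp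
    have "v \<in> V" using VU uv by auto
    moreover have "v \<notin> T" using uv ue unfolding T_def by auto
    ultimately show ?thesis unfolding Before_def using od by auto
  qed
next
  case (r X x y)
  have "e \<in> X" using r assms by auto
  then have "y = e" using r assms by auto
  moreover have "x \<in> S" "x < y"
    using r inv_setsD(1)[OF subsetD[OF R_subset r(1)]] unfolding consecutive_def by auto
  ultimately show ?thesis using e_le by force
next
  case (n X x y)
  have "e \<in> X" using n assms by auto
  then have xe: "x = e" using n assms by auto
  have "V \<subseteq> T" using remove_e_subset_T[of X] inv_setsD[OF n(1)] \<open>e \<in> X\<close> n xe by auto
  moreover have "insert e V = X" using n xe \<open>e \<in> X\<close> by auto
  ultimately show ?thesis using n(2) unfolding Before_def by auto
qed

lemma subset_S0: "Y \<subseteq> S \<Longrightarrow> e \<notin> Y \<Longrightarrow> Y \<subseteq> S0"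
  unfolding S0_def by auto

lemma inverted_remove_into_T:
  assumes "inverted p X" "X \<subseteq> S0" "x \<in> X" "y \<in> X" "x < y" "X - {y} \<subseteq> T"
  shows "y \<in> T"
proof (rule ccontr)
  assume "y \<notin> T"
  then have "p x < p e" "p e < p y" using assms(2-6) p_less_e_in_T p_e_less_outside_T by auto
  then show False using assms(1,3-5) unfolding inverted_def by force
qed

lemma least_outside_T:
  assumes "inverted p X" "X \<subseteq> S0" "x \<in> X" "x \<notin> T" "X - {x} \<subseteq> T"
  shows "\<forall>z\<in>X. x \<le> z"
proof (rule ccontr)
  assume "\<not> (\<forall>z\<in>X. x \<le> z)"
  then obtain z where z: "z \<in> X" "z < x" by (auto simp: not_le)
  then have "p z < p e" "p e < p x" using assms(2-5) p_less_e_in_T p_e_less_outside_T by auto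
  then show False using assms(1,3) z unfolding inverted_def by force
qed

lemma quasi_pair_into_T:
  assumes "quasi_pair p Z u v" "Z \<subseteq> S0" "Z - {u} \<subseteq> T"
  shows "u \<in> T"
proof (rule ccontr)
  assume "u \<notin> T"
  moreover have "v \<in> Z - {u}" using assms(1) unfolding quasi_pair_def by auto
  ultimately have "p v < p e" "p e < p u" using assms p_less_e_in_T p_e_less_outside_T
    unfolding quasi_pair_def by auto
  then show False using assms(1) unfolding quasi_pair_def by simp
qed

lemma quasi_pair_rank_outside_T:
  assumes "quasi_pair p Z u v" "Z \<subseteq> S0" "v \<notin> T" "Z - {v} \<subseteq> T"
  shows "rank_in Z u = 0"
proof -
  have "z \<notin> Z" if "z < u" for z
  proof
    assume "z \<in> Z"
    then have "p z < p e" "p e < p v" "z \<in> Z - {u}"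
      using assms that p_less_e_in_T p_e_less_outside_T unfolding quasi_pair_def by auto
    moreover have "v \<in> Z - {u}" "z < v" using assms(1) that unfolding quasi_pair_def by auto
    ultimately show False using assms(1) unfolding quasi_pair_def inverted_def by force
  qed
  then show ?thesis unfolding rank_in_def by auto
qed

lemma Before_down_in_T:
  assumes "(U, V) \<in> graph_rel S p (Suc k') R" "e \<notin> U" "e \<notin> V"
    "V \<subseteq> T" "insert e V \<in> R" "U \<subseteq> T"
  shows "insert e U \<in> R"
  using assms(1)
proof (cases rule: graph_rel_cases)
  case (q Z u v)
  have "u \<noteq> v" using q(3) unfolding quasi_pair_def by simp
  then have "Z = U \<union> V" using q(4) q(3) unfolding quasi_pair_def by auto
  then have ZT: "Z \<subseteq> T" using assms by auto
  have "(U, V) \<in> quasi_rel T p (Suc k')" by (rule quasi_relI[OF ZT q(2,3,4)])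
  then have "(insert e U, insert e V) \<in> quasi_rel S p (Suc (Suc k'))" by (rule quasi_rel_insert_e)
  then show ?thesis using R_lower_closed assms(5) by blast
next
  case (r X x y)
  have xy: "x \<in> X" "y \<in> X" "x < y" using r(2) unfolding consecutive_def by auto
  have XT: "X \<subseteq> T" using r xy assms by auto
  have XI: "X \<in> inv_sets S p (Suc (Suc k'))" using R_subset r(1) by blast
  note h = insert_e_inv_sets[OF XT XI]
  let ?J = "{z\<in>insert e X. insert e X - {z} \<in> R}"
  have ud: "up_or_down_closed (insert e X) ?J" using R_up_or_down_closed[OF h(1)] .
  have eJ: "e \<in> ?J" using h(2) r(1) by simp
  have yJ: "y \<in> ?J" using h(3)[OF xy(2)] r(4) assms(5) xy by simp
  have xS: "e \<le> x" using e_le xy XI inv_setsD by blast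
  have "x \<in> ?J" using ud eJ yJ xS xy unfolding up_or_down_closed_def by auto
  then show ?thesis using h(3)[OF xy(1)] r(3) by simp
next
  case (n X x y)
  have xy: "x \<in> X" "y \<in> X" "x < y" using n(3) unfolding consecutive_def by auto
  have XT: "X \<subseteq> T" using n xy assms by auto
  note h = insert_e_inv_sets[OF XT n(1)]
  let ?J = "{z\<in>insert e X. insert e X - {z} \<in> R}"
  have ud: "up_or_down_closed (insert e X) ?J" using R_up_or_down_closed[OF h(1)] .
  have eJ: "e \<notin> ?J" using h(2) n(2) by simp
  have xJ: "x \<in> ?J" using h(3)[OF xy(1)] n(5) assms(5) xy by simp
  have xS: "e \<le> x" using e_le xy n(1) inv_setsD by blast
  have "y \<in> ?J" using ud eJ xJ xS xy unfolding up_or_down_closed_def by auto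
  then show ?thesis using h(3)[OF xy(2)] n(4) by simp
qed

lemma Before_down_odd:
  assumes "(U, V) \<in> graph_rel S p (Suc k') R" "e \<notin> U" "e \<notin> V"
    "V \<subseteq> T" "insert e V \<in> R" "\<not> U \<subseteq> T" "odd (Suc k')"
  shows False
  using assms(1)
proof (cases rule: graph_rel_cases)
  case (q Z u v)
  then have Z: "Z = U \<union> V" "u \<in> Z" "v \<in> Z" unfolding quasi_pair_def by auto
  then have ZS0: "Z \<subseteq> S0" using subset_S0[of Z] q(1) assms(2,3) by auto
  show False
  proof (cases "U = Z - {u}")
    case True
    then have "V = Z - {v}" "odd (Suc k' - Suc (rank_in Z u))" using q(3,4) unfolding quasi_pair_def by auto
    moreover have "v \<notin> T" using True assms(4,6) \<open>V = Z - {v}\<close> by auto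
    ultimately show False using quasi_pair_rank_outside_T[OF q(3) ZS0] assms(4,7) by simp
  next
    case False
    then have "U = Z - {v}" "V = Z - {u}" using q(4) by auto
    then show False using quasi_pair_into_T[OF q(3) ZS0] assms(4,6) by auto
  qed
next
  case (r X x y)
  have X: "X \<in> inv_sets S p (Suc (Suc k'))" using R_subset r(1) by blast
  have xy: "x \<in> X" "y \<in> X" "x < y" using r(2) unfolding consecutive_def by auto
  then have XS0: "X \<subseteq> S0" using subset_S0[of X] inv_setsD(1)[OF X] r(3,4) assms(2,3) by auto
  then show False using inverted_remove_into_T[OF inv_setsD(3)[OF X] XS0 xy] r(3,4) assms(4,6) by auto
next
  case (n X x y)
  have xy: "x \<in> X" "y \<in> X" "x < y" using n(3) unfolding consecutive_def by auto
  then have XS0: "X \<subseteq> S0" using subset_S0[of X] inv_setsD(1)[OF n(1)] n(4,5) assms(2,3) by auto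
  have "x \<notin> T" using n(4,5) assms(4,6) xy by auto
  then have "\<forall>z\<in>X. x \<le> z" using least_outside_T[OF inv_setsD(3)[OF n(1)] XS0 xy(1)] n(5) assms(4) by simp
  moreover have "\<forall>z\<in>X - {x}. p z < p e" using n(5) assms(4) p_less_e_in_T by blast
  moreover have "p e < p x" using p_e_less_outside_T XS0 xy(1) \<open>x \<notin> T\<close> by blast
  ultimately have "(X, insert e (X - {x})) \<in> quasi_rel S p (Suc (Suc k'))"
    using quasi_rel_swap_min[OF XS0 inv_setsD(2,3)[OF n(1)] xy(1)] assms(7) by blast
  then show False using R_lower_closed assms(5) n(2,5) by blast
qed

lemma Before_down_even:
  assumes "(U, V) \<in> graph_rel S p (Suc k') R" "e \<notin> U" "e \<notin> V"
    "\<not> V \<subseteq> T" "even (Suc k')" "U \<subseteq> T"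
  shows "insert e U \<in> R"
  using assms(1)
proof (cases rule: graph_rel_cases)
  case (q Z u v)
  then have Z: "Z = U \<union> V" "u \<in> Z" "v \<in> Z" unfolding quasi_pair_def by auto
  then have ZS0: "Z \<subseteq> S0" using subset_S0[of Z] q(1) assms(2,3) by auto
  show ?thesis
  proof (cases "U = Z - {u}")
    case True
    then have "V = Z - {v}" using q(3,4) unfolding quasi_pair_def by auto
    then show ?thesis using quasi_pair_into_T[OF q(3) ZS0] True assms(4,6) by auto
  next
    case False
    then have "U = Z - {v}" "V = Z - {u}" "even (Suc k' - Suc (rank_in Z u))" using q(4) by auto
    moreover have "v \<notin> T" using calculation assms(4,6) by auto
    ultimately show ?thesis using quasi_pair_rank_outside_T[OF q(3) ZS0] assms(5,6) by simp
  qed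
next
  case (r X x y)
  have X: "X \<in> inv_sets S p (Suc (Suc k'))" using R_subset r(1) by blast
  have xy: "x \<in> X" "y \<in> X" "x < y" using r(2) unfolding consecutive_def by auto
  then have XS0: "X \<subseteq> S0" using subset_S0[of X] inv_setsD(1)[OF X] r(3,4) assms(2,3) by auto
  have "x \<notin> T" using r(3,4) assms(4,6) xy by auto
  then have "\<forall>z\<in>X. x \<le> z" using least_outside_T[OF inv_setsD(3)[OF X] XS0 xy(1)] r(3) assms(6) by simp
  moreover have "\<forall>z\<in>X - {x}. p z < p e" using r(3) assms(6) p_less_e_in_T by blast
  moreover have "p e < p x" using p_e_less_outside_T XS0 xy(1) \<open>x \<notin> T\<close> by blast
  ultimately have "(insert e (X - {x}), X) \<in> quasi_rel S p (Suc (Suc k'))"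
    using quasi_rel_swap_min[OF XS0 inv_setsD(2,3)[OF X] xy(1)] assms(5) by blast
  then show ?thesis using R_lower_closed r(1,3) by blast
next
  case (n X x y)
  have xy: "x \<in> X" "y \<in> X" "x < y" using n(3) unfolding consecutive_def by auto
  then have XS0: "X \<subseteq> S0" using subset_S0[of X] inv_setsD(1)[OF n(1)] n(4,5) assms(2,3) by auto
  then show ?thesis using inverted_remove_into_T[OF inv_setsD(3)[OF n(1)] XS0 xy] n(4,5) assms(4,6) by auto
qed

lemma Before_downward_closed:
  assumes "(U, V) \<in> graph_rel S p (Suc k') R" "e \<notin> U" "e \<notin> V" "V \<in> Before"
  shows "U \<in> Before"
proof (cases "U \<subseteq> T")
  case True
  have "insert e U \<in> R"
  proof (cases "V \<subseteq> T \<and> insert e V \<in> R")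
    case True
    then show ?thesis using Before_down_in_T assms \<open>U \<subseteq> T\<close> by blast
  next
    case False
    then have "even (Suc k') \<and> \<not> V \<subseteq> T" using assms(4) unfolding Before_def by blast
    then show ?thesis using Before_down_even assms \<open>U \<subseteq> T\<close> by blast
  qed
  then show ?thesis using True unfolding Before_def by blast
next
  case False
  show ?thesis
  proof (cases "even (Suc k')")
    case True
    then show ?thesis using False unfolding Before_def by blast
  next
    case odd: False
    then have "V \<subseteq> T \<and> insert e V \<in> R" using assms(4) unfolding Before_def by blast
    then show ?thesis using Before_down_odd assms False odd by blast
  qed
qed

text \<open>Sets in \<open>Before\<close> come first, then the sets containing \<open>e\<close>, then the remaining ones; edges between
  these layers only go upwards, and within a layer the potentials of the two smaller graphs apply.\<close>

definition layered_potential :: "(nat set \<Rightarrow> nat) \<Rightarrow> (nat set \<Rightarrow> nat) \<Rightarrow> nat \<Rightarrow> nat set \<Rightarrow> nat" where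
  "layered_potential f0 f1 M Y =
     (if e \<in> Y then M + f1 (Y - {e}) else if Y \<in> Before then f0 Y else 2 * M + f0 Y)"

lemma layered_potential_increasing:
  assumes f0: "\<forall>U V. (U, V) \<in> graph_rel S0 p (Suc k') R0 \<longrightarrow> f0 U < f0 V"
    and f1: "\<forall>U V. (U, V) \<in> graph_rel T p k' R1 \<longrightarrow> f1 U < f1 V"
    and M0: "\<forall>Y\<in>inv_sets S0 p (Suc k'). f0 Y < M" and M1: "\<forall>Y\<in>inv_sets T p k'. f1 Y < M"
    and edge: "(U, V) \<in> graph_rel S p (Suc k') R"
  shows "layered_potential f0 f1 M U < layered_potential f0 f1 M V"
proof -
  have U: "U \<in> inv_sets S p (Suc k')" using graph_rel_inv_sets[OF R_subset edge] by blast
  consider "e \<in> U" "e \<in> V" | "e \<in> U" "e \<notin> V" | "e \<notin> U" "e \<in> V" | "e \<notin> U" "e \<notin> V" by blast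
  then show ?thesis
  proof cases
    case 1
    then show ?thesis using edge_containing_e[OF edge 1] f1 unfolding layered_potential_def by auto
  next
    case 2
    then show ?thesis using edge_out_of_e[OF edge 2] M1 inv_sets_remove_e[OF U 2(1)]
      unfolding layered_potential_def by auto
  next
    case 3
    then show ?thesis using edge_into_e[OF edge 3] M0 inv_sets_avoiding_e[OF U 3(1)]
      unfolding layered_potential_def by auto
  next
    case 4
    then have "f0 U < f0 V" using f0 edge_avoiding_e[OF edge 4] by blast
    then show ?thesis using Before_downward_closed[OF edge 4] 4 unfolding layered_potential_def by auto
  qed
qed

end

lemma graph_rel_level_0:
  assumes "R \<subseteq> inv_sets S p (Suc 0)"
  shows "(U, V) \<notin> graph_rel S p 0 R"
proof
  have single: "u = v" if "card Y = Suc 0" "u \<in> Y" "v \<in> Y" for Y :: "nat set" and u v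
    using that by (auto simp: card_Suc_eq)
  assume "(U, V) \<in> graph_rel S p 0 R"
  then show False
  proof (cases rule: graph_rel_cases)
    case (q Z u v)
    then show False using single[of Z u v] unfolding quasi_pair_def by auto
  next
    case (r X x y)
    then show False
      using single[of X x y] inv_setsD(2)[OF subsetD[OF assms r(1)]] unfolding consecutive_def by simp
  next
    case (n X x y)
    then show False using single[of X x y] inv_setsD(2)[OF n(1)] unfolding consecutive_def by simp
  qed
qed

lemma graph_rel_potential:
  assumes "finite S" "inj_on p S" "consistent_set S p (Suc k) R"
  shows "\<exists>f :: nat set \<Rightarrow> nat. \<forall>U V. (U, V) \<in> graph_rel S p k R \<longrightarrow> f U < f V"
  using assms
proof (induction "card S" arbitrary: S k R rule: less_induct)
  case less
  have R: "R \<subseteq> inv_sets S p (Suc k)" using less.prems(3) unfolding consistent_set_def by simp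
  consider "k = 0" | "k \<noteq> 0" "S = {}" | k' where "k = Suc k'" "S \<noteq> {}" by (cases k) auto
  then show ?case
  proof cases
    case 1
    then show ?thesis using graph_rel_level_0[of R S p] R by auto
  next
    case 2
    then have "inv_sets S p k = {}" unfolding inv_sets_def by auto
    then show ?thesis using graph_rel_inv_sets[OF R] by blast
  next
    case 3
    interpret m: min_split S p k' R using less.prems 3 by unfold_locales auto
    have "card m.S0 < card S" unfolding m.S0_def using card_Diff1_less[OF less.prems(1) m.e_in_S] .
    from less.hyps[OF this m.finite_S0 inj_on_subset[OF less.prems(2) m.S0_subset_S] m.consistent_R0]
    obtain f0 :: "nat set \<Rightarrow> nat" where f0: "\<forall>U V. (U, V) \<in> graph_rel m.S0 p (Suc k') m.R0 \<longrightarrow> f0 U < f0 V"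
      by blast
    have TS: "m.T \<subseteq> S" using m.T_subset_S0 m.S0_subset_S by blast
    have "card m.T < card S" using psubset_card_mono[OF less.prems(1)] TS m.e_in_S m.e_notin_T by blast
    from less.hyps[OF this m.finite_T inj_on_subset[OF less.prems(2) TS] m.consistent_R1]
    obtain f1 :: "nat set \<Rightarrow> nat" where f1: "\<forall>U V. (U, V) \<in> graph_rel m.T p k' m.R1 \<longrightarrow> f1 U < f1 V"
      by blast
    define M where "M = Suc (Max (f0 ` inv_sets m.S0 p (Suc k') \<union> f1 ` inv_sets m.T p k'))"
    have "finite (f0 ` inv_sets m.S0 p (Suc k') \<union> f1 ` inv_sets m.T p k')"
      using finite_inv_sets m.finite_S0 m.finite_T by blast
    then have "\<forall>Y\<in>inv_sets m.S0 p (Suc k'). f0 Y < M" "\<forall>Y\<in>inv_sets m.T p k'. f1 Y < M"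
      unfolding M_def using Max_ge by (auto simp: le_imp_less_Suc)
    then show ?thesis using m.layered_potential_increasing[OF f0 f1] 3(1) by blast
  qed
qed

section \<open>Positions in lists and topological orders\<close>

definition precedes :: "'a list \<Rightarrow> 'a \<Rightarrow> 'a \<Rightarrow> bool" where
  "precedes l a b = (\<exists>i j. i < j \<and> j < length l \<and> l ! i = a \<and> l ! j = b)"

lemma precedes_Nil[simp]: "\<not> precedes [] a b"
  unfolding precedes_def by simp

lemma precedes_Cons: "precedes (x # l) a b \<longleftrightarrow> (x = a \<and> b \<in> set l) \<or> precedes l a b"
proof
  assume "precedes (x # l) a b"
  then obtain i j where ij: "i < j" "j < length (x # l)" "(x # l) ! i = a" "(x # l) ! j = b"
    unfolding precedes_def by blast
  show "(x = a \<and> b \<in> set l) \<or> precedes l a b"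
  proof (cases i)
    case 0
    then have "x = a" using ij by simp
    moreover obtain j' where "j = Suc j'" using ij 0 by (cases j) auto
    then have "b \<in> set l" using ij by auto
    ultimately show ?thesis by simp
  next
    case (Suc i')
    then obtain j' where j: "j = Suc j'" using ij by (cases j) auto
    then have "precedes l a b" unfolding precedes_def using ij Suc
      by (intro exI[of _ i'] exI[of _ j']) auto
    then show ?thesis by simp
  qed
next
  assume "(x = a \<and> b \<in> set l) \<or> precedes l a b"
  then show "precedes (x # l) a b"
  proof
    assume h: "x = a \<and> b \<in> set l"
    then obtain j where "j < length l" "l ! j = b" by (auto simp: in_set_conv_nth)
    then show ?thesis unfolding precedes_def using h by (intro exI[of _ 0] exI[of _ "Suc j"]) auto
  next
    assume "precedes l a b"
    then obtain i j where "i < j" "j < length l" "l ! i = a" "l ! j = b" unfolding precedes_def by blast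
    then show ?thesis unfolding precedes_def by (intro exI[of _ "Suc i"] exI[of _ "Suc j"]) auto
  qed
qed

lemma precedes_set: "precedes l a b \<Longrightarrow> a \<in> set l \<and> b \<in> set l"
  by (induction l) (auto simp: precedes_Cons)

lemma precedes_append: "precedes (l1 @ l2) a b \<longleftrightarrow> precedes l1 a b \<or> precedes l2 a b \<or> (a \<in> set l1 \<and> b \<in> set l2)"
  by (induction l1) (auto simp: precedes_Cons)

lemma precedes_asym: "distinct l \<Longrightarrow> precedes l a b \<Longrightarrow> \<not> precedes l b a"
  by (induction l) (auto simp: precedes_Cons dest: precedes_set)

lemma precedes_irrefl: "distinct l \<Longrightarrow> \<not> precedes l a a"
  using precedes_asym by fastforce

lemma precedes_trans: "distinct l \<Longrightarrow> precedes l a b \<Longrightarrow> precedes l b c \<Longrightarrow> precedes l a c"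
  by (induction l) (auto simp: precedes_Cons dest: precedes_set)

lemma precedes_total: "a \<in> set l \<Longrightarrow> b \<in> set l \<Longrightarrow> a \<noteq> b \<Longrightarrow> precedes l a b \<or> precedes l b a"
  by (induction l) (auto simp: precedes_Cons)

lemma precedes_triple:
  assumes "distinct l" "a \<in> set l" "b \<in> set l" "c \<in> set l" "a \<noteq> b" "b \<noteq> c"
  shows "(precedes l a b \<and> precedes l b c \<longrightarrow> precedes l a c) \<and>
    (\<not> precedes l a b \<and> \<not> precedes l b c \<longrightarrow> \<not> precedes l a c)"
proof -
  have "\<not> precedes l a c" if "\<not> precedes l a b" "\<not> precedes l b c"
  proof
    assume ac: "precedes l a c"
    have "precedes l b a" using precedes_total[OF assms(2,3,5)] that(1) by blast
    moreover have "precedes l c b" using precedes_total[OF assms(3,4,6)] that(2) by blast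
    ultimately have "precedes l c a" using precedes_trans[OF assms(1)] by blast
    then show False using ac precedes_asym[OF assms(1)] by blast
  qed
  moreover have "precedes l a c" if "precedes l a b" "precedes l b c" using precedes_trans[OF assms(1) that] .
  ultimately show ?thesis by blast
qed

lemma precedes_filterD: "precedes (filter P l) a b \<Longrightarrow> precedes l a b"
  by (induction l) (auto simp: precedes_Cons split: if_splits)

lemma precedes_filterI: "P a \<Longrightarrow> P b \<Longrightarrow> precedes l a b \<Longrightarrow> precedes (filter P l) a b"
  by (induction l) (auto simp: precedes_Cons)

lemma precedes_rev: "precedes (rev l) a b \<longleftrightarrow> precedes l b a"
  by (induction l) (auto simp: precedes_Cons precedes_append)

lemma precedes_map: "inj_on f (set l) \<Longrightarrow> a \<in> set l \<Longrightarrow> b \<in> set l \<Longrightarrow> precedes (map f l) (f a) (f b) \<longleftrightarrow> precedes l a b"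
proof (induction l)
  case Nil then show ?case by simp
next
  case (Cons x l)
  have i: "inj_on f (set l)" using Cons.prems(1) by simp
  have fa: "f x = f a \<longleftrightarrow> x = a" "f x = f b \<longleftrightarrow> x = b"
    using Cons.prems unfolding inj_on_def by auto
  have fb: "f b \<in> f ` set l \<longleftrightarrow> b \<in> set l"
    using Cons.prems unfolding inj_on_def by auto
  show ?case
  proof (cases "a \<in> set l \<and> b \<in> set l")
    case True
    then show ?thesis using Cons.IH[OF i] fa fb by (simp add: precedes_Cons)
  next
    case False
    then have "\<not> precedes l a b" using precedes_set by metis
    moreover have "\<not> precedes (map f l) (f a) (f b)"
    proof
      assume "precedes (map f l) (f a) (f b)"
      then have "f a \<in> f ` set l" "f b \<in> f ` set l" using precedes_set by fastforce+
      then have "a \<in> set l" "b \<in> set l" using Cons.prems unfolding inj_on_def by auto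
      then show False using False by simp
    qed
    ultimately show ?thesis using fa fb by (simp add: precedes_Cons)
  qed
qed

definition respects_order :: "('a \<times> 'a) set \<Rightarrow> 'a list \<Rightarrow> bool" where
  "respects_order r l = (\<forall>a b. (a, b) \<in> r \<longrightarrow> \<not> precedes l b a)"

lemma is_linext_iff: "is_linext S r l \<longleftrightarrow> distinct l \<and> set l = S \<and> respects_order r l"
proof -
  have "(\<forall>i<length l. \<forall>j<length l. (l ! i, l ! j) \<in> r \<longrightarrow> i \<le> j) \<longleftrightarrow> respects_order r l"
  proof
    assume h: "\<forall>i<length l. \<forall>j<length l. (l ! i, l ! j) \<in> r \<longrightarrow> i \<le> j"
    show "respects_order r l" unfolding respects_order_def precedes_def
    proof (intro allI impI notI)
      fix a b assume "(a, b) \<in> r" "\<exists>i j. i < j \<and> j < length l \<and> l ! i = b \<and> l ! j = a"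
      then obtain i j where ij: "i < j" "j < length l" "l ! i = b" "l ! j = a" "(a, b) \<in> r" by blast
      then have "(l ! j, l ! i) \<in> r" by simp
      moreover have "i < length l" using ij by simp
      ultimately have "j \<le> i" using h ij(2) by blast
      then show False using ij by simp
    qed
  next
    assume h: "respects_order r l"
    show "\<forall>i<length l. \<forall>j<length l. (l ! i, l ! j) \<in> r \<longrightarrow> i \<le> j"
    proof (intro allI impI)
      fix i j assume "i < length l" "j < length l" "(l ! i, l ! j) \<in> r"
      then show "i \<le> j"
      proof (rule_tac ccontr)
        assume a: "i < length l" "j < length l" "(l ! i, l ! j) \<in> r" "\<not> i \<le> j"
        then have "j < i" by simp
        then have "precedes l (l ! j) (l ! i)" unfolding precedes_def using a by blast
        then show False using h a(3) unfolding respects_order_def by blast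
      qed
    qed
  qed
  then show ?thesis unfolding is_linext_def by blast
qed

lemma precedes_list_eq:
  assumes "distinct ys" "distinct zs" "set ys = set zs" "\<forall>a b. precedes zs a b \<longrightarrow> precedes ys a b"
  shows "ys = zs"
  using assms
proof (induction zs arbitrary: ys)
  case Nil then show ?case by simp
next
  case (Cons z zs)
  obtain y ys' where ys: "ys = y # ys'" using Cons.prems(3) by (cases ys) auto
  have "y = z"
  proof (rule ccontr)
    assume "y \<noteq> z"
    then have "y \<in> set zs" using Cons.prems(3) ys by auto
    then have "precedes (z # zs) z y" by (simp add: precedes_Cons)
    then have "precedes (y # ys') z y" using Cons.prems(4) ys by blast
    then have "y \<in> set ys'" using \<open>y \<noteq> z\<close> by (auto simp: precedes_Cons dest: precedes_set)
    then show False using Cons.prems(1) ys by simp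
  qed
  have "ys' = zs"
  proof (rule Cons.IH)
    show "distinct ys'" "distinct zs" using Cons.prems ys by auto
    show "set ys' = set zs" using Cons.prems ys \<open>y = z\<close> by auto
    show "\<forall>a b. precedes zs a b \<longrightarrow> precedes ys' a b"
    proof (intro allI impI)
      fix a b assume "precedes zs a b"
      then have "precedes (z # zs) a b" "a \<in> set zs" by (auto simp: precedes_Cons dest: precedes_set)
      then have "precedes (z # ys') a b" using Cons.prems(4) ys \<open>y = z\<close> by blast
      moreover have "a \<noteq> z" using \<open>a \<in> set zs\<close> Cons.prems(2) by auto
      ultimately show "precedes ys' a b" by (simp add: precedes_Cons)
    qed
  qed
  then show ?case using ys \<open>y = z\<close> by simp
qed

lemma consecutive_precedes_list_eq:
  assumes "distinct ys" "distinct zs" "set ys = set zs"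
    "\<forall>i. Suc i < length zs \<longrightarrow> precedes ys (zs ! i) (zs ! Suc i)"
  shows "ys = zs"
proof (rule precedes_list_eq[OF assms(1-3)], intro allI impI)
  fix a b assume "precedes zs a b"
  then obtain i j where ij: "i < j" "j < length zs" "zs ! i = a" "zs ! j = b" unfolding precedes_def by blast
  have "\<forall>j. i < j \<longrightarrow> j < length zs \<longrightarrow> precedes ys (zs ! i) (zs ! j)"
  proof (intro allI impI)
    fix j assume "i < j" "j < length zs"
    then show "precedes ys (zs ! i) (zs ! j)"
    proof (induction j)
      case 0 then show ?case by simp
    next
      case (Suc j)
      show ?case
      proof (cases "i = j")
        case True
        then show ?thesis using assms(4) Suc.prems by simp
      next
        case False
        then have "precedes ys (zs ! i) (zs ! j)" using Suc by simp
        moreover have "precedes ys (zs ! j) (zs ! Suc j)" using assms(4) Suc.prems by simp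
        ultimately show ?thesis using precedes_trans[OF assms(1)] by blast
      qed
    qed
  qed
  then show "precedes ys a b" using ij by blast
qed

lemma sorted_key_enumeration:
  assumes "finite A"
  shows "\<exists>l. distinct l \<and> set l = A \<and> sorted (map f l)"
proof -
  obtain xs where "distinct xs" "set xs = A" using finite_distinct_list[OF assms] by blast
  then show ?thesis
    by (intro exI[of _ "sort_key f xs"]) (auto simp: distinct_sort sorted_sort_key)
qed

lemma sorted_key_precedes:
  fixes f :: "'a \<Rightarrow> nat"
  assumes "sorted (map f l)" "a \<in> set l" "b \<in> set l" "f a < f b"
  shows "precedes l a b"
proof -
  have "a \<noteq> b" using assms by auto
  have "\<not> precedes l b a"
  proof
    assume "precedes l b a"
    then obtain i j where "i < j" "j < length l" "l ! i = b" "l ! j = a" unfolding precedes_def by blast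
    then have "f b \<le> f a" using sorted_nth_mono[OF assms(1), of i j] by simp
    then show False using assms by simp
  qed
  then show ?thesis using precedes_total[OF assms(2,3) \<open>a \<noteq> b\<close>] by blast
qed

definition swap_step :: "('a \<times> 'a) set \<Rightarrow> ('a list \<times> 'a list) set" where
  "swap_step r = {(xs @ [a, b] @ ys, xs @ [b, a] @ ys) | xs a b ys. (a, b) \<notin> r \<and> (b, a) \<notin> r \<and>
     distinct (xs @ [a, b] @ ys) \<and> respects_order r (xs @ [a, b] @ ys) \<and> respects_order r (xs @ [b, a] @ ys)}"

lemma swap_stepI:
  assumes "(a, b) \<notin> r" "(b, a) \<notin> r" "distinct (xs @ [a, b] @ ys)"
    "respects_order r (xs @ [a, b] @ ys)" "respects_order r (xs @ [b, a] @ ys)"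
  shows "(xs @ [a, b] @ ys, xs @ [b, a] @ ys) \<in> swap_step r"
  unfolding swap_step_def using assms by blast

lemma respects_order_Cons: "respects_order r (z # l) \<longleftrightarrow> respects_order r l \<and> (\<forall>b\<in>set l. (b, z) \<notin> r)"
  unfolding respects_order_def by (auto simp: precedes_Cons)

lemma swap_step_set: "(l1, l2) \<in> swap_step r \<Longrightarrow> set l2 = set l1 \<and> distinct l2 \<and> distinct l1"
  unfolding swap_step_def by auto

lemma swap_steps_set: "(l1, l2) \<in> (swap_step r)\<^sup>* \<Longrightarrow> set l2 = set l1"
  by (induction rule: rtrancl_induct) (auto dest: swap_step_set)

lemma swap_steps_Cons:
  assumes "(l1, l2) \<in> (swap_step r)\<^sup>*" "z \<notin> set l1" "\<forall>b\<in>set l1. (b, z) \<notin> r"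
  shows "(z # l1, z # l2) \<in> (swap_step r)\<^sup>*"
  using assms(1)
proof (induction rule: rtrancl_induct)
  case base then show ?case by simp
next
  case (step l2 l3)
  have s2: "set l2 = set l1" using swap_steps_set[OF step.hyps(1)] .
  obtain xs a b ys where e: "l2 = xs @ [a, b] @ ys" "l3 = xs @ [b, a] @ ys" "(a, b) \<notin> r" "(b, a) \<notin> r"
    "distinct (xs @ [a, b] @ ys)" "respects_order r (xs @ [a, b] @ ys)" "respects_order r (xs @ [b, a] @ ys)"
    using step.hyps(2) unfolding swap_step_def by blast
  have "(z # l2, z # l3) \<in> swap_step r"
    using swap_stepI[of a b r "z # xs" ys] e s2 assms(2,3) by (auto simp: respects_order_Cons)
  then show ?case using step.IH by simp
qed

lemma swap_steps_move_front:
  assumes "distinct (as @ z # bs)" "respects_order r (as @ z # bs)" "\<forall>a\<in>set as. (a, z) \<notin> r \<and> (z, a) \<notin> r"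
  shows "(as @ z # bs, z # as @ bs) \<in> (swap_step r)\<^sup>*"
  using assms
proof (induction as arbitrary: bs rule: rev_induct)
  case Nil then show ?case by simp
next
  case (snoc a as)
  have az: "(a, z) \<notin> r" "(z, a) \<notin> r" using snoc.prems(3) by auto
  have l: "as @ [a] @ z # bs = as @ [a, z] @ bs" by simp
  have r2: "respects_order r (as @ [z, a] @ bs)"
  proof -
    have "\<not> precedes (as @ [z, a] @ bs) d c" if "(c, d) \<in> r" for c d
    proof
      assume b: "precedes (as @ [z, a] @ bs) d c"
      have "\<not> precedes (as @ [a, z] @ bs) d c" using snoc.prems(2) that unfolding respects_order_def by simp
      then show False using b az that by (auto simp: precedes_append precedes_Cons)
    qed
    then show ?thesis unfolding respects_order_def by blast
  qed
  have st: "(as @ [a, z] @ bs, as @ [z, a] @ bs) \<in> swap_step r"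
    by (rule swap_stepI) (use az snoc.prems r2 in auto)
  have "(as @ z # (a # bs), z # as @ (a # bs)) \<in> (swap_step r)\<^sup>*"
  proof (rule snoc.IH)
    show "distinct (as @ z # a # bs)" using snoc.prems(1) by auto
    show "respects_order r (as @ z # a # bs)" using r2 by simp
    show "\<forall>a\<in>set as. (a, z) \<notin> r \<and> (z, a) \<notin> r" using snoc.prems(3) by simp
  qed
  then show ?case using st l by simp
qed

lemma linext_swap_connected:
  assumes "distinct l1" "distinct l2" "set l1 = set l2" "respects_order r l1" "respects_order r l2"
  shows "(l1, l2) \<in> (swap_step r)\<^sup>*"
  using assms
proof (induction l2 arbitrary: l1)
  case Nil then show ?case by simp
next
  case (Cons z l2)
  have "z \<in> set l1" using Cons.prems(3) by simp
  then obtain as bs where l1: "l1 = as @ z # bs" by (meson split_list)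
  have c: "\<forall>a\<in>set as. (a, z) \<notin> r \<and> (z, a) \<notin> r"
  proof
    fix a assume a: "a \<in> set as"
    have az: "a \<noteq> z" using a Cons.prems(1) l1 by auto
    have "precedes l1 a z" using a l1 by (simp add: precedes_append precedes_Cons)
    then have "(z, a) \<notin> r" using Cons.prems(4) unfolding respects_order_def by blast
    moreover have "a \<in> set l2" using a az Cons.prems(3) l1 by auto
    then have "precedes (z # l2) z a" by (simp add: precedes_Cons)
    then have "(a, z) \<notin> r" using Cons.prems(5) unfolding respects_order_def by blast
    ultimately show "(a, z) \<notin> r \<and> (z, a) \<notin> r" by simp
  qed
  have m: "(l1, z # as @ bs) \<in> (swap_step r)\<^sup>*" using swap_steps_move_front[of as z bs r] Cons.prems l1 c by simp
  have rz: "respects_order r (z # as @ bs)" using swap_steps_set[OF m] m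
  proof -
    have "respects_order r (as @ bs)" using Cons.prems(4) l1 unfolding respects_order_def by (auto simp: precedes_append precedes_Cons)
    moreover have "\<forall>b\<in>set (as @ bs). (b, z) \<notin> r"
    proof
      fix b assume "b \<in> set (as @ bs)"
      then have "b \<in> set l2" "b \<noteq> z" using Cons.prems(1,3) l1 by auto
      then have "precedes (z # l2) z b" by (simp add: precedes_Cons)
      then show "(b, z) \<notin> r" using Cons.prems(5) unfolding respects_order_def by blast
    qed
    ultimately show ?thesis by (simp add: respects_order_Cons)
  qed
  have ih: "(as @ bs, l2) \<in> (swap_step r)\<^sup>*"
  proof (rule Cons.IH)
    show "distinct (as @ bs)" "distinct l2" using Cons.prems l1 by auto
    show "set (as @ bs) = set l2" using Cons.prems(1,2,3) l1 by auto
    show "respects_order r (as @ bs)" using rz by (simp add: respects_order_Cons)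
    show "respects_order r l2" using Cons.prems(5) by (simp add: respects_order_Cons)
  qed
  have "(z # as @ bs, z # l2) \<in> (swap_step r)\<^sup>*"
    using swap_steps_Cons[OF ih] Cons.prems(1) l1 rz by (auto simp: respects_order_Cons)
  then show ?case using m by simp
qed

lemma set_antilexl: "finite X \<Longrightarrow> set (antilexl X) = packet X"
  unfolding antilexl_conv packet_conv by simp

lemma set_lexl: "finite X \<Longrightarrow> set (lexl X) = packet X"
  unfolding lexl_conv packet_conv by simp

lemma distinct_antilexl: "finite X \<Longrightarrow> distinct (antilexl X)"
  unfolding antilexl_conv by (simp add: distinct_map inj_on_remove)

lemma distinct_lexl: "finite X \<Longrightarrow> distinct (lexl X)"
  unfolding lexl_conv by (simp add: distinct_map inj_on_remove)

lemma precedes_antilexl: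
  assumes "finite X" "x \<in> X" "y \<in> X" "x < y"
  shows "precedes (antilexl X) (X - {x}) (X - {y})"
proof -
  let ?xs = "sorted_list_of_set X"
  have "precedes ?xs x y"
  proof -
    have "?xs ! rank_in X x = x" "?xs ! rank_in X y = y" using nth_rank_in assms by auto
    moreover have "rank_in X x < rank_in X y" "rank_in X y < length ?xs"
      using rank_in_strict_mono[OF assms] rank_in_less_card[OF assms(1,3)] assms(1) by auto
    ultimately show ?thesis unfolding precedes_def by metis
  qed
  moreover have "inj_on (\<lambda>x. X - {x}) (set ?xs)" using inj_on_remove[of X] assms(1) by simp
  ultimately show ?thesis unfolding antilexl_conv[OF assms(1)] using precedes_map[of "\<lambda>x. X - {x}" ?xs x y] assms by simp
qed

lemma precedes_lexl:
  assumes "finite X" "x \<in> X" "y \<in> X" "x < y"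
  shows "precedes (lexl X) (X - {y}) (X - {x})"
  using precedes_antilexl[OF assms] unfolding lexl_rev by (simp add: precedes_rev)

lemma lexl_neq_antilexl:
  assumes "finite X" "2 \<le> card X"
  shows "lexl X \<noteq> antilexl X"
proof -
  obtain x y where "x \<in> X" "y \<in> X" "x < y"
  proof -
    obtain x y where "x \<in> X" "y \<in> X" "x \<noteq> y" using assms
      by (metis card_le_Suc0_iff_eq not_less_eq_eq numeral_2_eq_2)
    then show ?thesis using that by (metis nat_neq_iff)
  qed
  then have "precedes (antilexl X) (X - {x}) (X - {y})" "precedes (lexl X) (X - {y}) (X - {x})"
    using precedes_antilexl precedes_lexl assms by auto
  then show ?thesis using precedes_asym[OF distinct_antilexl[OF assms(1)]] by metis
qed

lemma potential_trancl:
  fixes f :: "'a \<Rightarrow> nat"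
  assumes "\<forall>U V. (U, V) \<in> G \<longrightarrow> f U < f V" "(a, b) \<in> G\<^sup>+"
  shows "f a < f b"
  using assms(2) by (induction rule: trancl_induct) (use assms(1) in fastforce)+

lemma precedes_rtrancl:
  assumes "distinct l" "\<forall>U V. (U, V) \<in> G \<longrightarrow> precedes l U V" "(a, b) \<in> G\<^sup>*"
  shows "a = b \<or> precedes l a b"
  using assms(3)
proof (induction rule: rtrancl_induct)
  case base then show ?case by simp
next
  case (step y z)
  then show ?case using assms(1,2) precedes_trans by metis
qed

lemma potential_acyclic:
  fixes f :: "'a \<Rightarrow> nat"
  assumes "\<forall>U V. (U, V) \<in> G \<longrightarrow> f U < f V"
  shows "acyclic G"
  unfolding acyclic_def using potential_trancl[OF assms] by blast

lemma is_linext_if_edges_precede: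
  assumes "distinct l" "set l = S" "\<forall>U V. (U, V) \<in> G \<longrightarrow> precedes l U V"
  shows "is_linext S (G\<^sup>* \<inter> S \<times> S) l"
proof -
  have "\<not> precedes l b a" if "(a, b) \<in> G\<^sup>*" for a b
    using precedes_rtrancl[OF assms(1,3) that] precedes_irrefl[OF assms(1)] precedes_asym[OF assms(1)]
    by metis
  then show ?thesis unfolding is_linext_iff respects_order_def using assms(1,2) by blast
qed

lemma linext_exists_if_potential:
  fixes f :: "'a \<Rightarrow> nat"
  assumes "finite S" "G \<subseteq> S \<times> S" "\<forall>U V. (U, V) \<in> G \<longrightarrow> f U < f V"
  shows "\<exists>l. is_linext S (G\<^sup>* \<inter> S \<times> S) l"
proof -
  obtain l where l: "distinct l" "set l = S" "sorted (map f l)"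
    using sorted_key_enumeration[OF assms(1)] by blast
  have "\<forall>U V. (U, V) \<in> G \<longrightarrow> precedes l U V"
    using sorted_key_precedes[OF l(3)] l(2) assms(2,3) by blast
  then show ?thesis using is_linext_if_edges_precede[OF l(1,2)] by blast
qed

lemma rtrancl_first_entry:
  assumes "(b, c) \<in> r\<^sup>*" "b \<notin> M" "c \<in> M"
  shows "\<exists>m\<in>M. (b, m) \<in> {(x, y) \<in> r. x \<notin> M}\<^sup>+"
  using assms
proof (induction rule: converse_rtrancl_induct)
  case (step y z)
  then have yz: "(y, z) \<in> {(x, y) \<in> r. x \<notin> M}" by simp
  show ?case
  proof (cases "z \<in> M")
    case False
    then obtain m where "m \<in> M" "(z, m) \<in> {(x, y) \<in> r. x \<notin> M}\<^sup>+" using step.IH step.prems by blast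
    then show ?thesis using yz by (meson trancl_into_trancl2)
  qed (use yz in blast)
qed simp

text \<open>A set \<open>M\<close> that no path of an acyclic graph leaves and re-enters can be placed as one block,
  in any internal order, in a topological order: first what lies below \<open>M\<close>, then \<open>M\<close>, then the rest.\<close>

definition path_convex :: "('a \<times> 'a) set \<Rightarrow> 'a set \<Rightarrow> bool" where
  "path_convex G M = (\<forall>a b c. a \<in> M \<longrightarrow> (a, b) \<in> G \<longrightarrow> (b, c) \<in> G\<^sup>* \<longrightarrow> c \<in> M \<longrightarrow> b \<in> M)"

lemma precedes_layered:
  fixes f :: "'a \<Rightarrow> nat"
  assumes pot: "\<forall>U V. (U, V) \<in> G \<longrightarrow> f U < f V" and GI: "G \<subseteq> I \<times> I"
    and convex: "path_convex G M"
    and l1: "set l1 = {y \<in> I - M. \<exists>m\<in>M. (y, m) \<in> G\<^sup>*}" "sorted (map f l1)"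
    and l2: "set l2 = I - M - set l1" "sorted (map f l2)"
    and L: "set L = M"
    and ab: "(a, b) \<in> G" "\<not> (a \<in> M \<and> b \<in> M)"
  shows "precedes (l1 @ L @ l2) a b"
proof -
  have I: "a \<in> I" "b \<in> I" using GI ab(1) by auto
  consider "a \<in> set l1" | "a \<in> M" | "a \<in> set l2" using I l2(1) by blast
  then show ?thesis
  proof cases
    case 1
    then show ?thesis
      using sorted_key_precedes[OF l1(2) 1, of b] pot ab(1) I(2) L l2(1)
      by (auto simp: precedes_append)
  next
    case 2
    then have "b \<notin> M" using ab(2) by blast
    then have "b \<notin> set l1" using convex 2 ab(1) l1(1) unfolding path_convex_def by blast
    then show ?thesis using 2 I(2) \<open>b \<notin> M\<close> L l2(1) by (auto simp: precedes_append)
  next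
    case 3
    have "b \<in> set l2"
    proof (rule ccontr)
      assume "b \<notin> set l2"
      then obtain c where "c \<in> M" "(b, c) \<in> G\<^sup>*" using I(2) l1(1) l2(1) by blast
      then have "(a, c) \<in> G\<^sup>*" using ab(1) by (meson converse_rtrancl_into_rtrancl)
      then show False using 3 I(1) \<open>c \<in> M\<close> l1(1) l2(1) by blast
    qed
    then show ?thesis using sorted_key_precedes[OF l2(2) 3] pot ab(1) by (simp add: precedes_append)
  qed
qed

lemma layered_enumeration:
  fixes f :: "'a \<Rightarrow> nat"
  assumes "finite I" "M \<subseteq> I" "G \<subseteq> I \<times> I" "\<forall>U V. (U, V) \<in> G \<longrightarrow> f U < f V"
    and "path_convex G M"
  shows "\<exists>l1 l2. (\<forall>L. distinct L \<and> set L = M \<longrightarrow> distinct (l1 @ L @ l2) \<and> set (l1 @ L @ l2) = I) \<and>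
    (\<forall>L a b. set L = M \<and> (a, b) \<in> G \<and> \<not> (a \<in> M \<and> b \<in> M) \<longrightarrow> precedes (l1 @ L @ l2) a b)"
proof -
  obtain l1 where l1: "distinct l1" "set l1 = {y \<in> I - M. \<exists>m\<in>M. (y, m) \<in> G\<^sup>*}" "sorted (map f l1)"
    using sorted_key_enumeration[of "{y \<in> I - M. \<exists>m\<in>M. (y, m) \<in> G\<^sup>*}" f] assms(1) by auto
  obtain l2 where l2: "distinct l2" "set l2 = I - M - set l1" "sorted (map f l2)"
    using sorted_key_enumeration[of "I - M - set l1" f] assms(1) by auto
  have "distinct (l1 @ L @ l2) \<and> set (l1 @ L @ l2) = I" if "distinct L" "set L = M" for L
    using that l1 l2 assms(2) by auto
  moreover have "precedes (l1 @ L @ l2) a b" if "set L = M" "(a, b) \<in> G" "\<not> (a \<in> M \<and> b \<in> M)" for L a b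
    by (rule precedes_layered[OF assms(4,3,5) l1(2,3) l2(2,3) that])
  ultimately show ?thesis by blast
qed

lemma consecutive_chain_trancl:
  assumes "finite X" "\<And>u v. consecutive X u v \<Longrightarrow> (X - {u}, X - {v}) \<in> r"
    and "x \<in> X" "y \<in> X" "x < y"
  shows "(X - {x}, X - {y}) \<in> r\<^sup>+"
  using assms(4,5)
proof (induction y rule: less_induct)
  case (less y)
  let ?B = "{z \<in> X. z < y}"
  have fin: "finite ?B" and ne: "?B \<noteq> {}" using assms(1,3) less.prems by auto
  define z where "z = Max ?B"
  have z: "z \<in> X" "z < y" "x \<le> z" using Max_in[OF fin ne] Max_ge[OF fin, of x] assms(3) less.prems
    unfolding z_def by auto
  have "u \<le> z" if "u \<in> X" "u < y" for u using Max_ge[OF fin] that unfolding z_def by simp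
  then have "consecutive X z y" unfolding consecutive_def using z less.prems(1) by force
  then have step: "(X - {z}, X - {y}) \<in> r" by (rule assms(2))
  show ?case
  proof (cases "x = z")
    case False
    then have "(X - {x}, X - {z}) \<in> r\<^sup>+" using less.IH[of z] z by simp
    then show ?thesis using step by (rule trancl_into_trancl)
  qed (use step in auto)
qed

lemma graph_rel_chain_in:
  assumes "X \<in> R" "card X = Suc k" "x \<in> X" "y \<in> X" "x < y"
  shows "(X - {x}, X - {y}) \<in> (graph_rel S p k R)\<^sup>+"
proof -
  have "finite X" using assms(2) by (intro card_ge_0_finite) simp
  then show ?thesis
    using assms(3-5) graph_relI_in[OF assms(1)] by (intro consecutive_chain_trancl) auto
qed

lemma graph_rel_chain_notin:
  assumes "X \<in> inv_sets S p (Suc k)" "X \<notin> R" "x \<in> X" "y \<in> X" "x < y"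
  shows "(X - {y}, X - {x}) \<in> (graph_rel S p k R)\<^sup>+"
proof -
  have "finite X" using inv_setsD(2)[OF assms(1)] by (intro card_ge_0_finite) simp
  then have "(X - {x}, X - {y}) \<in> ((graph_rel S p k R)\<inverse>)\<^sup>+"
    using assms(3-5) graph_relI_notin[OF assms(1,2)] by (intro consecutive_chain_trancl) auto
  then show ?thesis by (simp add: trancl_converse)
qed

lemma graph_rel_insert_iff:
  assumes "\<not> (a \<in> packet X \<and> b \<in> packet X)"
  shows "(a, b) \<in> graph_rel S p k (insert X R) \<longleftrightarrow> (a, b) \<in> graph_rel S p k R"
proof
  assume "(a, b) \<in> graph_rel S p k (insert X R)"
  then show "(a, b) \<in> graph_rel S p k R"
  proof (cases rule: graph_rel_cases)
    case (q Z u v)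
    show ?thesis using quasi_relI[OF q] by (rule graph_relI_quasi)
  next
    case (r X0 x y)
    then have "X0 \<noteq> X" using assms unfolding packet_conv consecutive_def by auto
    then show ?thesis using r graph_relI_in[of X0 R] by simp
  next
    case (n X0 x y)
    then show ?thesis using graph_relI_notin[of X0 S p k R] by simp
  qed
next
  assume "(a, b) \<in> graph_rel S p k R"
  then show "(a, b) \<in> graph_rel S p k (insert X R)"
  proof (cases rule: graph_rel_cases)
    case (q Z u v)
    show ?thesis using quasi_relI[OF q] by (rule graph_relI_quasi)
  next
    case (r X0 x y)
    then show ?thesis using graph_relI_in[of X0 "insert X R"] by simp
  next
    case (n X0 x y)
    then have "X0 \<noteq> X" using assms unfolding packet_conv consecutive_def by auto
    then show ?thesis using n graph_relI_notin[of X0 S p k "insert X R"] by simp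
  qed
qed

lemma graph_rel_within_packet:
  assumes "R \<subseteq> inv_sets S p (Suc k)" "X \<in> inv_sets S p (Suc k)" "(a, b) \<in> graph_rel S p k R"
    "a \<in> packet X" "b \<in> packet X"
  shows "\<exists>x y. consecutive X x y \<and>
    (if X \<in> R then a = X - {x} \<and> b = X - {y} else a = X - {y} \<and> b = X - {x})"
proof -
  have cX: "card X = Suc k" and iX: "inverted p X" using inv_setsD[OF assms(2)] by auto
  have fX: "finite X" using cX by (intro card_ge_0_finite) simp
  have ab: "a \<subseteq> X" "b \<subseteq> X" using assms(4,5) unfolding packet_conv by auto
  have same: "Y = X" if "Y = a \<union> b" "card Y = Suc k" for Y
    using card_subset_eq[OF fX, of Y] that ab cX by simp
  from assms(3) show ?thesis
  proof (cases rule: graph_rel_cases)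
    case (q Z u v)
    have "Z = a \<union> b" using q(3,4) unfolding quasi_pair_def by auto
    then have "Z = X" using same q(2) by blast
    then have "p v < p u" using iX q(3) unfolding quasi_pair_def inverted_def by blast
    then show ?thesis using q(3) unfolding quasi_pair_def by simp
  next
    case (r X0 x y)
    then have "X0 = a \<union> b" unfolding consecutive_def by auto
    then have "X0 = X" using same inv_setsD(2)[OF subsetD[OF assms(1) r(1)]] by simp
    then show ?thesis using r by auto
  next
    case (n X0 x y)
    then have "X0 = a \<union> b" unfolding consecutive_def by auto
    then have "X0 = X" using same inv_setsD(2)[OF n(1)] by simp
    then show ?thesis using n by auto
  qed
qed

lemma filter_packet_eq_antilexl:
  assumes "finite X" "distinct l" "packet X \<subseteq> set l"
    "\<And>x y. consecutive X x y \<Longrightarrow> precedes l (X - {x}) (X - {y})"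
  shows "filter (\<lambda>Y. Y \<in> packet X) l = antilexl X"
proof (rule consecutive_precedes_list_eq)
  let ?xs = "sorted_list_of_set X"
  show "distinct (filter (\<lambda>Y. Y \<in> packet X) l)" using assms(2) by simp
  show "distinct (antilexl X)" using distinct_antilexl[OF assms(1)] .
  show "set (filter (\<lambda>Y. Y \<in> packet X) l) = set (antilexl X)" using assms(3) set_antilexl[OF assms(1)] by auto
  show "\<forall>i. Suc i < length (antilexl X) \<longrightarrow>
      precedes (filter (\<lambda>Y. Y \<in> packet X) l) (antilexl X ! i) (antilexl X ! Suc i)"
  proof (intro allI impI)
    fix i assume "Suc i < length (antilexl X)"
    then have i: "Suc i < card X" unfolding antilexl_conv[OF assms(1)] using assms(1) by simp
    then have "antilexl X ! i = X - {?xs ! i}" "antilexl X ! Suc i = X - {?xs ! Suc i}"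
      unfolding antilexl_conv[OF assms(1)] using assms(1) by auto
    moreover have "X - {?xs ! i} \<in> packet X" "X - {?xs ! Suc i} \<in> packet X"
      using sorted_list_of_set_nth_mem[OF assms(1)] i unfolding packet_conv by auto
    ultimately show "precedes (filter (\<lambda>Y. Y \<in> packet X) l) (antilexl X ! i) (antilexl X ! Suc i)"
      using assms(4)[OF consecutive_sorted_nth[OF assms(1) i]] precedes_filterI[of "\<lambda>Y. Y \<in> packet X"]
      by simp
  qed
qed

lemma filter_packet_eq_lexl:
  assumes "finite X" "distinct l" "packet X \<subseteq> set l"
    "\<And>x y. consecutive X x y \<Longrightarrow> precedes l (X - {y}) (X - {x})"
  shows "filter (\<lambda>Y. Y \<in> packet X) l = lexl X"
proof -
  have "filter (\<lambda>Y. Y \<in> packet X) (rev l) = antilexl X"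
    using assms by (intro filter_packet_eq_antilexl) (auto simp: precedes_rev)
  then have "rev (filter (\<lambda>Y. Y \<in> packet X) l) = antilexl X" by (simp add: rev_filter)
  then show ?thesis unfolding lexl_rev by (metis rev_rev_ident)
qed

lemma packet_common_member:
  assumes "finite X" "finite X'" "card X = card X'" "X \<noteq> X'" "Y \<in> packet X" "Y \<in> packet X'"
  shows "Y = X \<inter> X'"
proof -
  obtain x x' where x: "x \<in> X" "Y = X - {x}" "x' \<in> X'" "Y = X' - {x'}"
    using assms(5,6) unfolding packet_conv by blast
  have sub: "Y \<subseteq> X \<inter> X'" using x by auto
  have "\<not> X \<subseteq> X'"
  proof
    assume "X \<subseteq> X'"
    then have "X = X'" using card_subset_eq[OF assms(2)] assms(3) by simp
    then show False using assms(4) by simp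
  qed
  then have "X \<inter> X' \<subset> X" by auto
  then have "card (X \<inter> X') < card X" using psubset_card_mono[OF assms(1)] by blast
  moreover have "card Y = card X - 1" using x assms(1) by simp
  ultimately have "card (X \<inter> X') \<le> card Y" by simp
  moreover have "finite (X \<inter> X')" using assms(1) by simp
  ultimately show ?thesis using card_seteq[OF _ sub] by blast
qed

lemma filter_packet_flip_other:
  assumes "finite X" "finite X'" "card X = card X'" "X' \<noteq> X"
  shows "filter (\<lambda>Y. Y \<in> packet X') (antilexl X) = filter (\<lambda>Y. Y \<in> packet X') (lexl X)"
proof -
  let ?F = "filter (\<lambda>Y. Y \<in> packet X') (lexl X)"
  have "set ?F \<subseteq> {X \<inter> X'}"
    using packet_common_member[OF assms(1-3)] assms(4) set_lexl[OF assms(1)] by auto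
  moreover have "distinct ?F" using distinct_lexl[OF assms(1)] by simp
  ultimately have "length ?F \<le> 1"
    using distinct_card[of ?F] card_mono[of "{X \<inter> X'}" "set ?F"] by auto
  then have "rev ?F = ?F" by (cases ?F) auto
  then show ?thesis unfolding lexl_rev by (simp add: rev_filter[symmetric])
qed

section \<open>Admissible orders and consistent sets\<close>

locale perm_setting =
  fixes n k :: nat and w :: "nat \<Rightarrow> nat"
  assumes perm: "w permutes {1..n}" and k1: "1 \<le> k"
begin

lemma inj_on_inv_w: "inj_on (inv w) {1..n}"
  using inj_on_subset[OF permutes_inj[OF permutes_inv[OF perm]] subset_UNIV] .

lemma Inv_finite_member: "X \<in> Inv n w m \<Longrightarrow> finite X"
  unfolding Inv_eq_inv_sets using inv_sets_finite_member[OF finite_atLeastAtMost] by blast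

lemma Inv_card: "X \<in> Inv n w m \<Longrightarrow> card X = m"
  unfolding Inv_eq_inv_sets inv_sets_def by blast

lemma finite_Inv: "finite (Inv n w m)"
  unfolding Inv_eq_inv_sets using finite_inv_sets[OF finite_atLeastAtMost] .

lemma packet_subset_Inv: "X \<in> Inv n w (Suc m) \<Longrightarrow> packet X \<subseteq> Inv n w m"
  using inv_sets_remove unfolding Inv_eq_inv_sets packet_conv by blast

lemma remove_in_Inv: "X \<in> Inv n w (Suc m) \<Longrightarrow> x \<in> X \<Longrightarrow> X - {x} \<in> Inv n w m"
  using packet_subset_Inv unfolding packet_conv by blast

lemma AwD:
  assumes "\<rho> \<in> Aw n w k"
  shows "distinct \<rho>" "set \<rho> = Inv n w k" "is_linext (Inv n w k) (Pw n w k) \<rho>"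
    "\<And>X. X \<in> Inv n w (k + 1) \<Longrightarrow> filter (\<lambda>Y. Y \<in> packet X) \<rho> \<in> {lexl X, antilexl X}"
  using assms unfolding Aw_def is_linext_def by auto

lemma Aw_precedes_packet_iff_Rev:
  assumes "\<rho> \<in> Aw n w k" "X \<in> Inv n w (Suc k)" "x \<in> X" "y \<in> X" "x < y"
  shows "precedes \<rho> (X - {x}) (X - {y}) \<longleftrightarrow> X \<in> Rev n w k \<rho>"
proof -
  have fX: "finite X" using Inv_finite_member assms(2) by blast
  have d: "distinct \<rho>" using AwD[OF assms(1)] by simp
  have f: "filter (\<lambda>Y. Y \<in> packet X) \<rho> \<in> {lexl X, antilexl X}" using AwD(4)[OF assms(1)] assms(2) by simp
  show ?thesis
  proof (cases "X \<in> Rev n w k \<rho>")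
    case True
    then have "filter (\<lambda>Y. Y \<in> packet X) \<rho> = antilexl X" unfolding Rev_def by simp
    then have "precedes \<rho> (X - {x}) (X - {y})" using precedes_antilexl[OF fX assms(3-5)] precedes_filterD by metis
    then show ?thesis using True by simp
  next
    case False
    then have "filter (\<lambda>Y. Y \<in> packet X) \<rho> = lexl X" using f assms(2) unfolding Rev_def by auto
    then have "precedes \<rho> (X - {y}) (X - {x})" using precedes_lexl[OF fX assms(3-5)] precedes_filterD by metis
    then show ?thesis using False precedes_asym[OF d] by metis
  qed
qed

lemma Aw_precedes_quasi_rel:
  assumes "\<rho> \<in> Aw n w k" "(A, B) \<in> quasi_rel {1..n} (inv w) k"
  shows "precedes \<rho> A B"
proof -
  have AB: "A \<in> Inv n w k" "B \<in> Inv n w k" using quasi_rel_inv_sets[OF assms(2)] unfolding Inv_eq_inv_sets by auto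
  have ne: "A \<noteq> B"
  proof -
    obtain Z u v where "quasi_pair (inv w) Z u v"
      "(A, B) = (Z - {u}, Z - {v}) \<or> (A, B) = (Z - {v}, Z - {u})"
      using assms(2) unfolding quasi_rel_def by (auto split: if_splits)
    then show ?thesis unfolding quasi_pair_def by auto
  qed
  have "(A, B) \<in> Pw n w k" unfolding Pw_eq_quasi_rel using assms(2) AB unfolding Inv_eq_inv_sets by auto
  then have "\<not> precedes \<rho> B A" using AwD(3)[OF assms(1)] unfolding is_linext_iff respects_order_def by blast
  then show ?thesis using precedes_total[of A \<rho> B] AB ne AwD(2)[OF assms(1)] by blast
qed

lemma graph_rel_irrefl: "(a, b) \<in> graph_rel S p m R \<Longrightarrow> a \<noteq> b"
  by (erule graph_rel_cases) (auto simp: quasi_pair_def consecutive_def)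

lemma leR_eq_graph_rel: "R \<subseteq> Inv n w (Suc k) \<Longrightarrow> leR n w k R = (graph_rel {1..n} (inv w) k R)\<^sup>* \<inter> (Inv n w k \<times> Inv n w k)"
  unfolding leR_def using GR_eq_graph_rel[of R n w k] by simp

lemma graph_rel_Inv:
  assumes "R \<subseteq> Inv n w (Suc k)" "(a, b) \<in> graph_rel {1..n} (inv w) k R"
  shows "a \<in> Inv n w k" "b \<in> Inv n w k"
  using graph_rel_inv_sets[of R "{1..n}" "inv w" k a b] assms unfolding Inv_eq_inv_sets by auto

lemma linext_precedes_graph_rel:
  assumes "R \<subseteq> Inv n w (Suc k)" "is_linext (Inv n w k) (leR n w k R) \<rho>" "(a, b) \<in> graph_rel {1..n} (inv w) k R"
  shows "precedes \<rho> a b"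
proof -
  have ab: "a \<in> Inv n w k" "b \<in> Inv n w k" using graph_rel_Inv[OF assms(1,3)] by auto
  have "(a, b) \<in> leR n w k R" unfolding leR_eq_graph_rel[OF assms(1)] using assms(3) ab by auto
  then have "\<not> precedes \<rho> b a" using assms(2) unfolding is_linext_iff respects_order_def by blast
  moreover have "a \<noteq> b" using graph_rel_irrefl[OF assms(3)] .
  ultimately show ?thesis using precedes_total[of a \<rho> b] ab assms(2) unfolding is_linext_iff by blast
qed

lemma linext_filter_packet:
  assumes "R \<subseteq> Inv n w (Suc k)" "is_linext (Inv n w k) (leR n w k R) \<rho>" "X \<in> Inv n w (Suc k)"
  shows "filter (\<lambda>Y. Y \<in> packet X) \<rho> = (if X \<in> R then antilexl X else lexl X)"
proof -
  have fX: "finite X" using Inv_finite_member assms(3) by blast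
  have d: "distinct \<rho>" and sub: "packet X \<subseteq> set \<rho>"
    using assms(2) packet_subset_Inv[OF assms(3)] unfolding is_linext_iff by auto
  have XI: "X \<in> inv_sets {1..n} (inv w) (Suc k)" using assms(3) unfolding Inv_eq_inv_sets .
  show ?thesis
  proof (cases "X \<in> R")
    case True
    have "filter (\<lambda>Y. Y \<in> packet X) \<rho> = antilexl X"
      by (intro filter_packet_eq_antilexl[OF fX d sub] linext_precedes_graph_rel[OF assms(1,2)]
          graph_relI_in[OF True])
    then show ?thesis using True by simp
  next
    case False
    have "filter (\<lambda>Y. Y \<in> packet X) \<rho> = lexl X"
      by (intro filter_packet_eq_lexl[OF fX d sub] linext_precedes_graph_rel[OF assms(1,2)]
          graph_relI_notin[OF XI False])
    then show ?thesis using False by simp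
  qed
qed

lemma Pw_sub_leR:
  assumes "R \<subseteq> Inv n w (Suc k)"
  shows "Pw n w k \<subseteq> leR n w k R"
proof -
  have "quasi_rel {1..n} (inv w) k \<subseteq> graph_rel {1..n} (inv w) k R" unfolding graph_rel_def by blast
  then have "(quasi_rel {1..n} (inv w) k)\<^sup>* \<subseteq> (graph_rel {1..n} (inv w) k R)\<^sup>*" by (rule rtrancl_mono)
  then show ?thesis unfolding Pw_eq_quasi_rel leR_eq_graph_rel[OF assms] Inv_eq_inv_sets by blast
qed

lemma linext_leR_Aw:
  assumes "R \<subseteq> Inv n w (Suc k)" "is_linext (Inv n w k) (leR n w k R) \<rho>"
  shows "\<rho> \<in> Aw n w k" "Rev n w k \<rho> = R"
proof -
  have d: "distinct \<rho>" and sr: "set \<rho> = Inv n w k" and rs: "respects_order (leR n w k R) \<rho>"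
    using assms(2) unfolding is_linext_iff by auto
  have "Pw n w k \<subseteq> leR n w k R" by (rule Pw_sub_leR[OF assms(1)])
  then have "respects_order (Pw n w k) \<rho>" using rs unfolding respects_order_def by blast
  then have l: "is_linext (Inv n w k) (Pw n w k) \<rho>" using d sr unfolding is_linext_iff by simp
  have f: "filter (\<lambda>Y. Y \<in> packet X) \<rho> \<in> {lexl X, antilexl X}" if "X \<in> Inv n w (k + 1)" for X
    using linext_filter_packet[OF assms] that by simp
  show "\<rho> \<in> Aw n w k" unfolding Aw_def using l f by blast
  show "Rev n w k \<rho> = R"
  proof (intro set_eqI iffI)
    fix X assume "X \<in> Rev n w k \<rho>"
    then have X: "X \<in> Inv n w (Suc k)" "filter (\<lambda>Y. Y \<in> packet X) \<rho> = antilexl X" unfolding Rev_def by auto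
    have "2 \<le> card X" using Inv_card[OF X(1)] k1 by simp
    then have "lexl X \<noteq> antilexl X" using lexl_neq_antilexl Inv_finite_member X(1) by blast
    then show "X \<in> R" using linext_filter_packet[OF assms X(1)] X(2) by (auto split: if_splits)
  next
    fix X assume "X \<in> R"
    then show "X \<in> Rev n w k \<rho>" using linext_filter_packet[OF assms] assms(1) unfolding Rev_def by auto
  qed
qed

lemma Rev_subset: "Rev n w k \<rho> \<subseteq> Inv n w (Suc k)"
  unfolding Rev_def by auto

lemma Aw_linext_leR_Rev:
  assumes "\<rho> \<in> Aw n w k"
  shows "is_linext (Inv n w k) (leR n w k (Rev n w k \<rho>)) \<rho>"
proof -
  have "\<forall>U V. (U, V) \<in> graph_rel {1..n} (inv w) k (Rev n w k \<rho>) \<longrightarrow> precedes \<rho> U V"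
  proof (intro allI impI)
    fix U V assume "(U, V) \<in> graph_rel {1..n} (inv w) k (Rev n w k \<rho>)"
    then show "precedes \<rho> U V"
    proof (cases rule: graph_rel_cases)
      case (q Z u v)
      then show ?thesis using Aw_precedes_quasi_rel[OF assms] quasi_relI[OF q] by blast
    next
      case (r X x y)
      then show ?thesis
        using Aw_precedes_packet_iff_Rev[OF assms] Rev_subset unfolding consecutive_def by blast
    next
      case (n X x y)
      then have X: "X \<in> Inv n w (Suc k)" and xy: "x \<in> X" "y \<in> X" "x < y"
        unfolding Inv_eq_inv_sets consecutive_def by auto
      then have "\<not> precedes \<rho> (X - {x}) (X - {y})" using Aw_precedes_packet_iff_Rev[OF assms] n(2) by simp
      moreover have "X - {x} \<in> set \<rho>" "X - {y} \<in> set \<rho>" "X - {x} \<noteq> X - {y}"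
        using remove_in_Inv[OF X] xy AwD(2)[OF assms] by auto
      ultimately show ?thesis using precedes_total n by metis
    qed
  qed
  then show ?thesis
    unfolding leR_eq_graph_rel[OF Rev_subset] using is_linext_if_edges_precede AwD(1,2)[OF assms] by blast
qed

lemma linext_leR_exists:
  assumes "consistent_set {1..n} (inv w) (Suc k) R"
  shows "\<exists>\<rho>. is_linext (Inv n w k) (leR n w k R) \<rho>"
proof -
  have RI: "R \<subseteq> Inv n w (Suc k)" using assms unfolding consistent_set_def Inv_eq_inv_sets by simp
  obtain f :: "nat set \<Rightarrow> nat" where "\<forall>U V. (U, V) \<in> graph_rel {1..n} (inv w) k R \<longrightarrow> f U < f V"
    using graph_rel_potential[OF finite_atLeastAtMost inj_on_inv_w assms] by blast
  moreover have "graph_rel {1..n} (inv w) k R \<subseteq> Inv n w k \<times> Inv n w k" using graph_rel_Inv[OF RI] by auto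
  ultimately show ?thesis
    unfolding leR_eq_graph_rel[OF RI] using linext_exists_if_potential[OF finite_Inv] by blast
qed

lemma Aw_precedes_remove_iff:
  assumes "\<rho> \<in> Aw n w k" "X \<in> Inv n w (Suc k)" "x \<in> X" "y \<in> X" "x \<noteq> y"
  shows "precedes \<rho> (X - {x}) (X - {y}) \<longleftrightarrow> (X \<in> Rev n w k \<rho> \<longleftrightarrow> x < y)"
proof (cases "x < y")
  case True
  then show ?thesis using Aw_precedes_packet_iff_Rev[OF assms(1-4) True] by simp
next
  case False
  then have "y < x" using assms(5) by simp
  have "X - {x} \<in> set \<rho>" "X - {y} \<in> set \<rho>" "X - {x} \<noteq> X - {y}"
    using remove_in_Inv[OF assms(2)] assms(3-5) AwD(2)[OF assms(1)] by auto
  then have "precedes \<rho> (X - {x}) (X - {y}) \<longleftrightarrow> \<not> precedes \<rho> (X - {y}) (X - {x})"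
    using precedes_total[of "X - {x}" \<rho> "X - {y}"] precedes_asym[OF AwD(1)[OF assms(1)], of "X - {x}" "X - {y}"]
    by blast
  then show ?thesis using Aw_precedes_packet_iff_Rev[OF assms(1,2,4,3) \<open>y < x\<close>] False by simp
qed

lemma Aw_precedes_remove_third:
  assumes "\<rho> \<in> Aw n w k" "Z \<subseteq> {1..n}" "card Z = Suc (Suc k)" "quasi_pair (inv w) Z u v"
    "c \<in> Z" "c \<noteq> u" "c \<noteq> v"
  shows "precedes \<rho> (Z - {u} - {c}) (Z - {v} - {c}) \<longleftrightarrow> odd (k - Suc (rank_in (Z - {c}) u))"
proof -
  have "finite Z" using assms(2) finite_subset by blast
  then have cW: "card (Z - {c}) = Suc k" using assms(3,5) by simp
  have qW: "quasi_pair (inv w) (Z - {c}) u v"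
    using assms(4-7) inverted_subset[of "inv w" "Z - {u}" "Z - {c} - {u}"]
      inverted_subset[of "inv w" "Z - {v}" "Z - {c} - {v}"]
    unfolding quasi_pair_def by auto
  have WS: "Z - {c} \<subseteq> {1..n}" using assms(2) by blast
  have W: "Z - {c} - {u} = Z - {u} - {c}" "Z - {c} - {v} = Z - {v} - {c}" by auto
  show ?thesis
  proof (cases "odd (k - Suc (rank_in (Z - {c}) u))")
    case True
    then have "(Z - {u} - {c}, Z - {v} - {c}) \<in> quasi_rel {1..n} (inv w) k"
      using quasi_relI[OF WS cW qW, of "Z - {u} - {c}" "Z - {v} - {c}"] W by simp
    then show ?thesis using Aw_precedes_quasi_rel[OF assms(1)] True by simp
  next
    case False
    then have "(Z - {v} - {c}, Z - {u} - {c}) \<in> quasi_rel {1..n} (inv w) k"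
      using quasi_relI[OF WS cW qW, of "Z - {v} - {c}" "Z - {u} - {c}"] W by simp
    then have "precedes \<rho> (Z - {v} - {c}) (Z - {u} - {c})" by (rule Aw_precedes_quasi_rel[OF assms(1)])
    then show ?thesis using False precedes_asym[OF AwD(1)[OF assms(1)]] by blast
  qed
qed

lemma Rev_no_gap:
  assumes "\<rho> \<in> Aw n w k" "X \<in> Inv n w (Suc (Suc k))" "a \<in> X" "b \<in> X" "c \<in> X" "a < b" "b < c"
  shows "\<not> (X - {a} \<in> Rev n w k \<rho> \<and> X - {c} \<in> Rev n w k \<rho> \<and> X - {b} \<notin> Rev n w k \<rho>)"
        "\<not> (X - {a} \<notin> Rev n w k \<rho> \<and> X - {c} \<notin> Rev n w k \<rho> \<and> X - {b} \<in> Rev n w k \<rho>)"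
proof -
  let ?A = "X - {a} - {b}" and ?B = "X - {a} - {c}" and ?C = "X - {b} - {c}"
  have Xr: "X - {a} \<in> Inv n w (Suc k)" "X - {b} \<in> Inv n w (Suc k)" "X - {c} \<in> Inv n w (Suc k)"
    using remove_in_Inv[OF assms(2)] assms by auto
  have eq: "X - {b} - {a} = ?A" "X - {c} - {a} = ?B" "X - {c} - {b} = ?C" by auto
  have AB: "precedes \<rho> ?A ?B \<longleftrightarrow> X - {a} \<in> Rev n w k \<rho>"
    using Aw_precedes_remove_iff[OF assms(1) Xr(1), of b c] assms(3-7) by simp
  have AC: "precedes \<rho> ?A ?C \<longleftrightarrow> X - {b} \<in> Rev n w k \<rho>"
    using Aw_precedes_remove_iff[OF assms(1) Xr(2), of a c] assms(3-7) unfolding eq by simp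
  have BC: "precedes \<rho> ?B ?C \<longleftrightarrow> X - {c} \<in> Rev n w k \<rho>"
    using Aw_precedes_remove_iff[OF assms(1) Xr(3), of a b] assms(3-7) unfolding eq by simp
  have "?A \<in> set \<rho>" "?B \<in> set \<rho>" "?C \<in> set \<rho>"
    using remove_in_Inv Xr assms(3-7) AwD(2)[OF assms(1)] by auto
  moreover have "?A \<noteq> ?B" "?B \<noteq> ?C" using assms by auto
  ultimately have "(precedes \<rho> ?A ?B \<and> precedes \<rho> ?B ?C \<longrightarrow> precedes \<rho> ?A ?C) \<and>
      (\<not> precedes \<rho> ?A ?B \<and> \<not> precedes \<rho> ?B ?C \<longrightarrow> \<not> precedes \<rho> ?A ?C)"
    by (rule precedes_triple[OF AwD(1)[OF assms(1)]])
  then show "\<not> (X - {a} \<in> Rev n w k \<rho> \<and> X - {c} \<in> Rev n w k \<rho> \<and> X - {b} \<notin> Rev n w k \<rho>)"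
    "\<not> (X - {a} \<notin> Rev n w k \<rho> \<and> X - {c} \<notin> Rev n w k \<rho> \<and> X - {b} \<in> Rev n w k \<rho>)"
    unfolding AB AC BC by blast+
qed

lemma Rev_up_or_down_closed:
  assumes "\<rho> \<in> Aw n w k" "X \<in> Inv n w (Suc (Suc k))"
  shows "up_or_down_closed X {x\<in>X. X - {x} \<in> Rev n w k \<rho>}"
proof (rule ccontr)
  let ?J = "{x\<in>X. X - {x} \<in> Rev n w k \<rho>}"
  assume "\<not> up_or_down_closed X ?J"
  then obtain x y x' y' where h: "x \<in> ?J" "y \<in> X" "x \<le> y" "y \<notin> ?J" "x' \<in> ?J" "y' \<in> X" "y' \<le> x'" "y' \<notin> ?J"
    unfolding up_or_down_closed_def by blast
  have xy: "x < y" "y' < x'" using h by (auto simp: le_less)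
  have "x \<noteq> y'" using h by auto
  then show False
  proof (cases "y' < x")
    case True
    then show ?thesis using Rev_no_gap(2)[OF assms, of y' x y] h xy by auto
  next
    case False
    then have "x < y'" using \<open>x \<noteq> y'\<close> by simp
    then show ?thesis using Rev_no_gap(1)[OF assms, of x y' x'] h xy by auto
  qed
qed

text \<open>Lower closedness along a quasi-inversion \<open>(A, B)\<close> with \<open>A \<union> B = Z\<close>: a third element \<open>c\<close> of \<open>Z\<close>
  relates the packets of \<open>Z - {u}\<close>, \<open>Z - {v}\<close> and \<open>Z - {c}\<close> through their common members, and the
  order of these three members in \<open>\<rho>\<close> is transitive.\<close>

lemma Rev_lower_closed:
  assumes "\<rho> \<in> Aw n w k" "(A, B) \<in> quasi_rel {1..n} (inv w) (Suc k)" "B \<in> Rev n w k \<rho>"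
  shows "A \<in> Rev n w k \<rho>"
proof -
  obtain Z u v where Z: "Z \<subseteq> {1..n}" "card Z = Suc (Suc k)" "quasi_pair (inv w) Z u v"
    "(odd (Suc k - Suc (rank_in Z u)) \<and> A = Z - {u} \<and> B = Z - {v})
      \<or> (even (Suc k - Suc (rank_in Z u)) \<and> A = Z - {v} \<and> B = Z - {u})"
    using assms(2) by (rule quasi_relE)
  have fZ: "finite Z" using Z(1) finite_subset by blast
  have cons: "consecutive Z u v" using quasi_pair_consecutive[OF Z(3)] .
  then have uv: "u \<in> Z" "v \<in> Z" "u < v" unfolding consecutive_def by auto
  have Zr: "Z - {u} \<in> Inv n w (Suc k)" "Z - {v} \<in> Inv n w (Suc k)"
    using Z(1-3) fZ unfolding Inv_eq_inv_sets inv_sets_def quasi_pair_def by auto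
  have "\<not> Z \<subseteq> {u, v}"
  proof
    assume "Z \<subseteq> {u, v}"
    then have "card Z \<le> card {u, v}" by (intro card_mono) auto
    also have "\<dots> \<le> 2" by (cases "u = v") auto
    finally show False using Z(2) k1 by simp
  qed
  then obtain c where c: "c \<in> Z" "c \<noteq> u" "c \<noteq> v" by blast
  let ?A0 = "Z - {u} - {v}" and ?B0 = "Z - {u} - {c}" and ?C0 = "Z - {v} - {c}"
  have side: "v < c \<longleftrightarrow> \<not> c < u" "u < c \<longleftrightarrow> \<not> c < u"
    using cons c unfolding consecutive_def by auto
  have "Z - {v} - {u} = ?A0" by auto
  then have AC: "precedes \<rho> ?A0 ?C0 \<longleftrightarrow> (Z - {v} \<in> Rev n w k \<rho> \<longleftrightarrow> \<not> c < u)"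
    using Aw_precedes_remove_iff[OF assms(1) Zr(2), of u c] uv c side(2) by simp
  have AB: "precedes \<rho> ?A0 ?B0 \<longleftrightarrow> (Z - {u} \<in> Rev n w k \<rho> \<longleftrightarrow> \<not> c < u)"
    using Aw_precedes_remove_iff[OF assms(1) Zr(1), of v c] uv c side(1) by simp
  have BC: "precedes \<rho> ?B0 ?C0 \<longleftrightarrow> (odd (Suc k - Suc (rank_in Z u)) \<longleftrightarrow> c < u)"
    using Aw_precedes_remove_third[OF assms(1) Z(1-3) c] odd_rank_remove_third[OF fZ Z(2) cons c] by simp
  have "?A0 \<in> set \<rho>" "?B0 \<in> set \<rho>" "?C0 \<in> set \<rho>"
    using remove_in_Inv Zr uv c AwD(2)[OF assms(1)] by auto
  moreover have "?A0 \<noteq> ?B0" "?B0 \<noteq> ?C0" using uv c by auto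
  ultimately have "(precedes \<rho> ?A0 ?B0 \<and> precedes \<rho> ?B0 ?C0 \<longrightarrow> precedes \<rho> ?A0 ?C0) \<and>
      (\<not> precedes \<rho> ?A0 ?B0 \<and> \<not> precedes \<rho> ?B0 ?C0 \<longrightarrow> \<not> precedes \<rho> ?A0 ?C0)"
    by (rule precedes_triple[OF AwD(1)[OF assms(1)]])
  then show ?thesis using Z(4) assms(3) unfolding AB AC BC by auto
qed

lemma consistent_set_Rev: "\<rho> \<in> Aw n w k \<Longrightarrow> consistent_set {1..n} (inv w) (Suc k) (Rev n w k \<rho>)"
  unfolding consistent_set_def
proof (intro conjI allI impI ballI)
  show "Rev n w k \<rho> \<subseteq> inv_sets {1..n} (inv w) (Suc k)" using Rev_subset unfolding Inv_eq_inv_sets .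
next
  fix A B assume "\<rho> \<in> Aw n w k" "(A, B) \<in> quasi_rel {1..n} (inv w) (Suc k)" "B \<in> Rev n w k \<rho>"
  then show "A \<in> Rev n w k \<rho>" using Rev_lower_closed by blast
next
  fix X assume "\<rho> \<in> Aw n w k" "X \<in> inv_sets {1..n} (inv w) (Suc (Suc k))"
  then show "up_or_down_closed X {x\<in>X. X - {x} \<in> Rev n w k \<rho>}" using Rev_up_or_down_closed unfolding Inv_eq_inv_sets by blast
qed

section \<open>Commutation classes and the order\<close>

lemma swapstep_Rev:
  assumes "(\<rho>, \<sigma>) \<in> swapstep n w k"
  shows "Rev n w k \<sigma> = Rev n w k \<rho>"
proof -
  obtain xs a b ys where e: "\<rho> = xs @ [a, b] @ ys" "\<sigma> = xs @ [b, a] @ ys" "commute n w k a b"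
    using assms unfolding swapstep_def by blast
  have "filter (\<lambda>Y. Y \<in> packet X) \<sigma> = filter (\<lambda>Y. Y \<in> packet X) \<rho>" if "X \<in> Inv n w (k + 1)" for X
  proof -
    have "X \<in> subs n (k + 1)" using that unfolding Inv_def by simp
    then have "\<not> (a \<in> packet X \<and> b \<in> packet X)" using e(3) unfolding commute_def by blast
    then show ?thesis using e by auto
  qed
  then show ?thesis unfolding Rev_def by auto
qed

lemma packet_leR_comparable:
  assumes "R \<subseteq> Inv n w (Suc k)" "a \<in> Inv n w k" "b \<in> Inv n w k" "a \<noteq> b"
    "Z \<in> subs n (k + 1)" "a \<in> packet Z" "b \<in> packet Z"
  shows "(a, b) \<in> leR n w k R \<or> (b, a) \<in> leR n w k R"
proof -
  let ?G = "graph_rel {1..n} (inv w) k R"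
  obtain x y where xy: "x \<in> Z" "a = Z - {x}" "y \<in> Z" "b = Z - {y}"
    using assms(6,7) unfolding packet_conv by blast
  have "x \<noteq> y" using xy assms(4) by auto
  have ZS: "Z \<subseteq> {1..n}" "card Z = Suc k" using assms(5) unfolding subs_def by auto
  have ia: "inverted (inv w) (Z - {x})" "inverted (inv w) (Z - {y})"
    using assms(2,3) xy unfolding Inv_eq_inv_sets inv_sets_def by auto
  have "(a, b) \<in> ?G\<^sup>+ \<or> (b, a) \<in> ?G\<^sup>+"
  proof (cases "inverted (inv w) Z")
    case True
    then have ZI: "Z \<in> inv_sets {1..n} (inv w) (Suc k)" using ZS unfolding inv_sets_def by simp
    have chain: "(Z - {x}, Z - {y}) \<in> ?G\<^sup>+ \<or> (Z - {y}, Z - {x}) \<in> ?G\<^sup>+"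
      if "x \<in> Z" "y \<in> Z" "x < y" for x y
      using graph_rel_chain_in[of Z R k x y] graph_rel_chain_notin[OF ZI, of R x y] ZS(2) that by blast
    show ?thesis
    proof (cases "x < y")
      case True
      then show ?thesis using chain[of x y] xy by simp
    next
      case False
      then have "y < x" using \<open>x \<noteq> y\<close> by simp
      then show ?thesis using chain[of y x] xy by blast
    qed
  next
    case False
    then obtain s t where st: "s \<in> Z" "t \<in> Z" "s < t" "\<not> inv w t < inv w s"
      unfolding inverted_def by blast
    have "inv w s \<noteq> inv w t" using inj_on_inv_w st ZS unfolding inj_on_def by (metis less_irrefl subsetD)
    then have plt: "inv w s < inv w t" using st by simp
    have stxy: "(s = x \<and> t = y) \<or> (s = y \<and> t = x)"
      using noninversion_hits_removed[OF ia(1) st(1-3) plt] noninversion_hits_removed[OF ia(2) st(1-3) plt]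
        st(3) \<open>x \<noteq> y\<close> by auto
    then have qp: "quasi_pair (inv w) Z s t" unfolding quasi_pair_def using st plt ia by auto
    have "(Z - {s}, Z - {t}) \<in> quasi_rel {1..n} (inv w) k \<or> (Z - {t}, Z - {s}) \<in> quasi_rel {1..n} (inv w) k"
      using quasi_relI[OF ZS qp, of "Z - {s}" "Z - {t}"] quasi_relI[OF ZS qp, of "Z - {t}" "Z - {s}"] by auto
    then show ?thesis using stxy xy graph_relI_quasi by blast
  qed
  then show ?thesis unfolding leR_eq_graph_rel[OF assms(1)] using assms(2,3) by (auto dest: trancl_into_rtrancl)
qed

lemma swap_steps_simw:
  assumes "R \<subseteq> Inv n w (Suc k)" "(l1, l2) \<in> (swap_step (leR n w k R))\<^sup>*" "is_linext (Inv n w k) (leR n w k R) l1"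
  shows "(l1, l2) \<in> (swapstep n w k \<inter> (Aw n w k \<times> Aw n w k))\<^sup>* \<and> is_linext (Inv n w k) (leR n w k R) l2"
  using assms(2)
proof (induction rule: rtrancl_induct)
  case base then show ?case using assms(3) by simp
next
  case (step y z)
  have ly: "is_linext (Inv n w k) (leR n w k R) y" using step.IH by simp
  obtain xs a b ys where e: "y = xs @ [a, b] @ ys" "z = xs @ [b, a] @ ys" "(a, b) \<notin> leR n w k R"
    "(b, a) \<notin> leR n w k R" "distinct (xs @ [a, b] @ ys)" "respects_order (leR n w k R) (xs @ [b, a] @ ys)"
    using step.hyps(2) unfolding swap_step_def by blast
  have lz: "is_linext (Inv n w k) (leR n w k R) z"
    using ly e unfolding is_linext_iff by auto
  have ab: "a \<in> Inv n w k" "b \<in> Inv n w k" "a \<noteq> b" using ly e unfolding is_linext_iff by auto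
  have c: "commute n w k a b"
    unfolding commute_def
  proof (intro conjI)
    show "a \<in> Inv n w k" "b \<in> Inv n w k" using ab by auto
    show "(a, b) \<notin> Pw n w k" "(b, a) \<notin> Pw n w k" using e(3,4) Pw_sub_leR[OF assms(1)] by auto
    show "\<not> (\<exists>Z'\<in>subs n (k + 1). a \<in> packet Z' \<and> b \<in> packet Z')"
      using packet_leR_comparable[OF assms(1) ab] e(3,4) by blast
  qed
  have "(y, z) \<in> swapstep n w k" unfolding swapstep_def using e(1,2) c by blast
  moreover have "y \<in> Aw n w k" "z \<in> Aw n w k" using linext_leR_Aw[OF assms(1)] ly lz by auto
  ultimately have yz: "(y, z) \<in> swapstep n w k \<inter> (Aw n w k \<times> Aw n w k)" by blast
  have "(l1, z) \<in> (swapstep n w k \<inter> (Aw n w k \<times> Aw n w k))\<^sup>*"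
    using rtrancl_into_rtrancl[OF conjunct1[OF step.IH] yz] .
  then show ?case using lz by simp
qed

lemma simw_class_eq_Linext:
  assumes "\<rho> \<in> Aw n w k"
  shows "simw n w k `` {\<rho>} = Linext n w k (Rev n w k \<rho>)"
proof
  let ?R = "Rev n w k \<rho>"
  have RI: "?R \<subseteq> Inv n w (Suc k)" using Rev_subset .
  have l\<rho>: "is_linext (Inv n w k) (leR n w k ?R) \<rho>" using Aw_linext_leR_Rev[OF assms] .
  show "Linext n w k ?R \<subseteq> simw n w k `` {\<rho>}"
  proof
    fix \<sigma> assume "\<sigma> \<in> Linext n w k ?R"
    then have l\<sigma>: "is_linext (Inv n w k) (leR n w k ?R) \<sigma>" unfolding Linext_def by simp
    have "(\<rho>, \<sigma>) \<in> (swap_step (leR n w k ?R))\<^sup>*"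
      using linext_swap_connected[of \<rho> \<sigma> "leR n w k ?R"] l\<rho> l\<sigma> unfolding is_linext_iff by auto
    then show "\<sigma> \<in> simw n w k `` {\<rho>}" using swap_steps_simw[OF RI _ l\<rho>] unfolding simw_def by blast
  qed
  show "simw n w k `` {\<rho>} \<subseteq> Linext n w k ?R"
  proof
    fix \<sigma> assume "\<sigma> \<in> simw n w k `` {\<rho>}"
    then have "(\<rho>, \<sigma>) \<in> (swapstep n w k \<inter> (Aw n w k \<times> Aw n w k))\<^sup>*" unfolding simw_def by simp
    then have "is_linext (Inv n w k) (leR n w k ?R) \<sigma>"
    proof (induction rule: rtrancl_induct)
      case base then show ?case using l\<rho> .
    next
      case (step y z)
      have "Rev n w k y = ?R" using linext_leR_Aw(2)[OF RI step.IH] .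
      moreover have "Rev n w k z = Rev n w k y" using swapstep_Rev step.hyps(2) by blast
      moreover have "z \<in> Aw n w k" using step.hyps(2) by blast
      ultimately show ?case using Aw_linext_leR_Rev by metis
    qed
    then show "\<sigma> \<in> Linext n w k ?R" unfolding Linext_def by simp
  qed
qed

lemma Bw_iff: "c \<in> Bw n w k \<longleftrightarrow> (\<exists>\<rho>\<in>Aw n w k. c = Linext n w k (Rev n w k \<rho>))"
  unfolding Bw_def quotient_def using simw_class_eq_Linext by auto

lemma flipstep_Rev:
  assumes "(\<rho>, \<sigma>) \<in> flipstep n w k" "\<rho> \<in> Aw n w k"
  shows "\<exists>X. X \<notin> Rev n w k \<rho> \<and> Rev n w k \<sigma> = insert X (Rev n w k \<rho>)"
proof -
  obtain xs X ys where e: "\<rho> = xs @ lexl X @ ys" "\<sigma> = xs @ antilexl X @ ys" "X \<in> Inv n w (k + 1)"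
    using assms(1) unfolding flipstep_def by blast
  have fX: "finite X" and cX: "card X = Suc k" using Inv_finite_member Inv_card e(3) by auto
  have "\<forall>z\<in>set xs \<union> set ys. z \<notin> packet X" using AwD(1)[OF assms(2)] e(1) set_lexl[OF fX] by auto
  then have flip: "filter (\<lambda>Y. Y \<in> packet X) \<rho> = lexl X" "filter (\<lambda>Y. Y \<in> packet X) \<sigma> = antilexl X"
    using e set_lexl[OF fX] set_antilexl[OF fX] by (auto simp: filter_empty_conv)
  have other: "filter (\<lambda>Y. Y \<in> packet X') \<sigma> = filter (\<lambda>Y. Y \<in> packet X') \<rho>"
    if "X' \<in> Inv n w (k + 1)" "X' \<noteq> X" for X'
    using filter_packet_flip_other[OF fX Inv_finite_member[OF that(1)] _ that(2)] cX Inv_card[OF that(1)] e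
    by simp
  have "X \<notin> Rev n w k \<rho>" using flip(1) lexl_neq_antilexl[OF fX] cX k1 unfolding Rev_def by simp
  moreover have "Rev n w k \<sigma> = insert X (Rev n w k \<rho>)"
  proof (intro set_eqI)
    fix X' show "X' \<in> Rev n w k \<sigma> \<longleftrightarrow> X' \<in> insert X (Rev n w k \<rho>)"
      using other[of X'] flip(2) e(3) unfolding Rev_def by (cases "X' = X") auto
  qed
  ultimately show ?thesis by blast
qed

lemma graph_rel_acyclic:
  assumes "consistent_set {1..n} (inv w) (Suc k) R"
  shows "acyclic (graph_rel {1..n} (inv w) k R)"
proof -
  obtain f :: "nat set \<Rightarrow> nat" where "\<forall>U V. (U, V) \<in> graph_rel {1..n} (inv w) k R \<longrightarrow> f U < f V"
    using graph_rel_potential[OF finite_atLeastAtMost inj_on_inv_w assms] by blast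
  then show ?thesis by (rule potential_acyclic)
qed

text \<open>Leaving the packet of \<open>X \<notin> R\<close> and returning to it is impossible: the return point would be
  comparable to the starting point inside the packet, in \<open>G_R\<close> or in \<open>G_{R \<union> {X}}\<close>, closing a cycle
  there, since away from the packet the two graphs have the same edges.\<close>

lemma packet_convex:
  assumes cR: "consistent_set {1..n} (inv w) (Suc k) R"
    and cR': "consistent_set {1..n} (inv w) (Suc k) (insert X R)"
    and XI: "X \<in> Inv n w (Suc k)" and XR: "X \<notin> R"
  shows "path_convex (graph_rel {1..n} (inv w) k R) (packet X)"
  unfolding path_convex_def
proof (intro allI impI, rule ccontr)
  fix a b c
  assume path: "a \<in> packet X" "(a, b) \<in> graph_rel {1..n} (inv w) k R"
    "(b, c) \<in> (graph_rel {1..n} (inv w) k R)\<^sup>*" "c \<in> packet X" and b: "b \<notin> packet X"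
  let ?G = "graph_rel {1..n} (inv w) k R" and ?G' = "graph_rel {1..n} (inv w) k (insert X R)"
  let ?H = "{(x, y) \<in> ?G. x \<notin> packet X}"
  obtain m where m: "m \<in> packet X" "(b, m) \<in> ?H\<^sup>+" using rtrancl_first_entry[OF path(3) b path(4)] by blast
  have "?H \<subseteq> ?G'"
  proof
    fix e assume "e \<in> ?H"
    then obtain x y where "e = (x, y)" "(x, y) \<in> ?G" "x \<notin> packet X" by blast
    then show "e \<in> ?G'" using graph_rel_insert_iff[of x X y] by simp
  qed
  then have "(b, m) \<in> ?G\<^sup>+" "(b, m) \<in> ?G'\<^sup>+" using trancl_mono[OF m(2)] by auto
  moreover have "(a, b) \<in> ?G'" using graph_rel_insert_iff[of a X b] path(2) b by simp
  ultimately have am: "(a, m) \<in> ?G\<^sup>+" "(a, m) \<in> ?G'\<^sup>+" using path(2) by (auto intro: trancl_into_trancl2)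
  obtain x1 x2 where x: "x1 \<in> X" "a = X - {x1}" "x2 \<in> X" "m = X - {x2}"
    using path(1) m(1) unfolding packet_conv by blast
  have XIG: "X \<in> inv_sets {1..n} (inv w) (Suc k)" using XI unfolding Inv_eq_inv_sets .
  have "m = a \<or> (m, a) \<in> ?G\<^sup>+ \<or> (m, a) \<in> ?G'\<^sup>+"
  proof (cases x1 x2 rule: linorder_cases)
    case less
    then show ?thesis using graph_rel_chain_notin[OF XIG XR x(1,3)] x by simp
  next
    case greater
    then show ?thesis using graph_rel_chain_in[of X "insert X R" k x2 x1] inv_setsD(2)[OF XIG] x by simp
  qed (use x in simp)
  then have "(a, a) \<in> ?G\<^sup>+ \<or> (a, a) \<in> ?G'\<^sup>+" using am by (auto intro: trancl_trans)
  then show False using graph_rel_acyclic[OF cR] graph_rel_acyclic[OF cR'] unfolding acyclic_def by blast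
qed

lemma flip_block_exists:
  assumes cR: "consistent_set {1..n} (inv w) (Suc k) R"
    and cR': "consistent_set {1..n} (inv w) (Suc k) (insert X R)"
    and XI: "X \<in> Inv n w (Suc k)" and XR: "X \<notin> R"
  shows "\<exists>xs ys. is_linext (Inv n w k) (leR n w k R) (xs @ lexl X @ ys) \<and>
                 is_linext (Inv n w k) (leR n w k (insert X R)) (xs @ antilexl X @ ys)"
proof -
  let ?G = "graph_rel {1..n} (inv w) k R" and ?G' = "graph_rel {1..n} (inv w) k (insert X R)"
  have RI: "R \<subseteq> Inv n w (Suc k)" and R'I: "insert X R \<subseteq> Inv n w (Suc k)"
    using cR cR' unfolding consistent_set_def Inv_eq_inv_sets by auto
  have XIG: "X \<in> inv_sets {1..n} (inv w) (Suc k)" using XI unfolding Inv_eq_inv_sets .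
  have RIs: "R \<subseteq> inv_sets {1..n} (inv w) (Suc k)" "insert X R \<subseteq> inv_sets {1..n} (inv w) (Suc k)"
    using RI R'I unfolding Inv_eq_inv_sets .
  have fX: "finite X" using Inv_finite_member XI by blast
  obtain f :: "nat set \<Rightarrow> nat" where f: "\<forall>U V. (U, V) \<in> ?G \<longrightarrow> f U < f V"
    using graph_rel_potential[OF finite_atLeastAtMost inj_on_inv_w cR] by blast
  have GI: "?G \<subseteq> Inv n w k \<times> Inv n w k" using graph_rel_Inv[OF RI] by auto
  obtain l1 l2 where
    lists: "\<forall>L. distinct L \<and> set L = packet X \<longrightarrow>
      distinct (l1 @ L @ l2) \<and> set (l1 @ L @ l2) = Inv n w k"
    and layered: "\<forall>L a b. set L = packet X \<and> (a, b) \<in> ?G \<and> \<not> (a \<in> packet X \<and> b \<in> packet X) \<longrightarrow>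
      precedes (l1 @ L @ l2) a b"
    using layered_enumeration[OF finite_Inv packet_subset_Inv[OF XI] GI f packet_convex[OF cR cR' XI XR]]
    by (elim exE conjE)
  have "precedes (l1 @ lexl X @ l2) a b" if e: "(a, b) \<in> ?G" for a b
  proof (cases "a \<in> packet X \<and> b \<in> packet X")
    case True
    then obtain x y where "consecutive X x y" "a = X - {y}" "b = X - {x}"
      using graph_rel_within_packet[OF RIs(1) XIG e] XR by auto
    then have "precedes (lexl X) a b" using precedes_lexl[OF fX] unfolding consecutive_def by blast
    then show ?thesis by (simp add: precedes_append)
  next
    case False
    then show ?thesis using layered set_lexl[OF fX] e by blast
  qed
  moreover have "precedes (l1 @ antilexl X @ l2) a b" if e: "(a, b) \<in> ?G'" for a b
  proof (cases "a \<in> packet X \<and> b \<in> packet X")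
    case True
    then obtain x y where "consecutive X x y" "a = X - {x}" "b = X - {y}"
      using graph_rel_within_packet[OF RIs(2) XIG e] by auto
    then have "precedes (antilexl X) a b" using precedes_antilexl[OF fX] unfolding consecutive_def by blast
    then show ?thesis by (simp add: precedes_append)
  next
    case False
    then have "(a, b) \<in> ?G" using graph_rel_insert_iff[of a X b] e by simp
    then show ?thesis using layered set_antilexl[OF fX] False by blast
  qed
  ultimately show ?thesis
    unfolding leR_eq_graph_rel[OF RI] leR_eq_graph_rel[OF R'I]
    using lists distinct_lexl[OF fX] set_lexl[OF fX] distinct_antilexl[OF fX] set_antilexl[OF fX]
    by (intro exI[of _ l1] exI[of _ l2] conjI is_linext_if_edges_precede) auto
qed

lemma Cw_iff_consistent_set: "R \<in> Cw n w (Suc k) \<longleftrightarrow> consistent_set {1..n} (inv w) (Suc k) R"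
  unfolding Cw_def using consistent_eq_consistent_set[of n w "Suc k" R] by simp

lemma Cw_subset_Inv: "R \<in> Cw n w (Suc k) \<Longrightarrow> R \<subseteq> Inv n w (Suc k)"
  unfolding Cw_iff_consistent_set consistent_set_def Inv_eq_inv_sets by simp

lemma Rev_on_Linext: "R \<in> Cw n w (Suc k) \<Longrightarrow> \<sigma> \<in> Linext n w k R \<Longrightarrow> Rev n w k \<sigma> = R"
  using linext_leR_Aw(2)[OF Cw_subset_Inv] unfolding Linext_def by blast

lemma Linext_nonempty: "R \<in> Cw n w (Suc k) \<Longrightarrow> Linext n w k R \<noteq> {}"
  using linext_leR_exists unfolding Cw_iff_consistent_set Linext_def by blast

lemma Rev_image_Linext: "R \<in> Cw n w (Suc k) \<Longrightarrow> Rev n w k ` Linext n w k R = {R}"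
  using Rev_on_Linext Linext_nonempty by blast

lemma RevB_Linext: "R \<in> Cw n w (Suc k) \<Longrightarrow> RevB n w k (Linext n w k R) = R"
  unfolding RevB_def using Rev_image_Linext by simp

lemma Bw_eq_Linext_image: "Bw n w k = Linext n w k ` Cw n w (Suc k)"
proof
  show "Bw n w k \<subseteq> Linext n w k ` Cw n w (Suc k)"
    using Bw_iff consistent_set_Rev Cw_iff_consistent_set by blast
next
  show "Linext n w k ` Cw n w (Suc k) \<subseteq> Bw n w k"
  proof
    fix c assume "c \<in> Linext n w k ` Cw n w (Suc k)"
    then obtain R where R: "R \<in> Cw n w (Suc k)" "c = Linext n w k R" by blast
    then obtain \<rho> where "\<rho> \<in> Linext n w k R" using Linext_nonempty by blast
    then have "\<rho> \<in> Aw n w k" "Rev n w k \<rho> = R"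
      using linext_leR_Aw[OF Cw_subset_Inv[OF R(1)]] Rev_on_Linext[OF R(1)] unfolding Linext_def by auto
    then show "c \<in> Bw n w k" using Bw_iff R(2) by blast
  qed
qed

lemma bij_betw_RevB: "bij_betw (RevB n w k) (Linext n w k ` Cw n w (Suc k)) (Cw n w (Suc k))"
  by (rule bij_betw_byWitness[where f' = "Linext n w k"]) (auto simp: RevB_Linext)

abbreviation Bw_steps :: "(nat set list \<times> nat set list) set" where
  "Bw_steps \<equiv> (swapstep n w k \<union> flipstep n w k) \<inter> (Aw n w k \<times> Aw n w k)"

abbreviation Cw_cover :: "(nat set set \<times> nat set set) set" where
  "Cw_cover \<equiv> {(S, S'). S \<in> Cw n w (k + 1) \<and> S' \<in> Cw n w (k + 1) \<and> S \<subset> S' \<and> card (S' - S) = 1}"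

lemma Bw_steps_Rev:
  assumes "(\<rho>, \<sigma>) \<in> Bw_steps\<^sup>*"
  shows "(Rev n w k \<rho>, Rev n w k \<sigma>) \<in> Cw_cover\<^sup>*"
  using assms
proof (induction rule: rtrancl_induct)
  case (step y z)
  then have yz: "y \<in> Aw n w k" "z \<in> Aw n w k" by auto
  show ?case
  proof (cases "(y, z) \<in> swapstep n w k")
    case True
    then show ?thesis using swapstep_Rev step.IH by simp
  next
    case False
    then have "(y, z) \<in> flipstep n w k" using step.hyps(2) by blast
    then obtain X where X: "X \<notin> Rev n w k y" "Rev n w k z = insert X (Rev n w k y)"
      using flipstep_Rev yz(1) by blast
    have "Rev n w k y \<in> Cw n w (k + 1)" "Rev n w k z \<in> Cw n w (k + 1)"
      using consistent_set_Rev yz Cw_iff_consistent_set by auto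
    moreover have "Rev n w k z - Rev n w k y = {X}" using X by auto
    ultimately have "(Rev n w k y, Rev n w k z) \<in> Cw_cover" using X by auto
    then show ?thesis by (rule rtrancl_into_rtrancl[OF step.IH])
  qed
qed simp

lemma Linext_Bw_steps:
  assumes "R \<in> Cw n w (Suc k)" "\<rho> \<in> Linext n w k R" "\<sigma> \<in> Linext n w k R"
  shows "(\<rho>, \<sigma>) \<in> Bw_steps\<^sup>*"
proof -
  have \<rho>: "\<rho> \<in> Aw n w k" "Rev n w k \<rho> = R"
    using linext_leR_Aw[OF Cw_subset_Inv[OF assms(1)]] assms(2) unfolding Linext_def by auto
  then have "\<sigma> \<in> simw n w k `` {\<rho>}" using simw_class_eq_Linext[OF \<rho>(1)] assms(3) by simp
  then have "(\<rho>, \<sigma>) \<in> (swapstep n w k \<inter> (Aw n w k \<times> Aw n w k))\<^sup>*" unfolding simw_def by simp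
  moreover have "swapstep n w k \<inter> (Aw n w k \<times> Aw n w k) \<subseteq> Bw_steps" by blast
  ultimately show ?thesis using rtrancl_mono by blast
qed

lemma Cw_cover_Bw_steps:
  assumes "(R, S) \<in> Cw_cover\<^sup>*" "R \<in> Cw n w (Suc k)"
  shows "\<forall>\<rho>\<in>Linext n w k R. \<forall>\<sigma>\<in>Linext n w k S. (\<rho>, \<sigma>) \<in> Bw_steps\<^sup>*"
  using assms(1)
proof (induction rule: rtrancl_induct)
  case base
  then show ?case using Linext_Bw_steps[OF assms(2)] by blast
next
  case (step S S')
  then have SS': "S \<in> Cw n w (Suc k)" "S' \<in> Cw n w (Suc k)" "S \<subset> S'" "card (S' - S) = 1" by auto
  then obtain X where "S' - S = {X}" using card_1_singletonE by blast
  then have S': "S' = insert X S" "X \<notin> S" using SS'(3) by auto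
  have cS: "consistent_set {1..n} (inv w) (Suc k) S" "consistent_set {1..n} (inv w) (Suc k) (insert X S)"
    using SS'(1,2) S'(1) Cw_iff_consistent_set by auto
  have XI: "X \<in> Inv n w (Suc k)" using Cw_subset_Inv[OF SS'(2)] S'(1) by blast
  obtain xs ys where b: "is_linext (Inv n w k) (leR n w k S) (xs @ lexl X @ ys)"
    "is_linext (Inv n w k) (leR n w k S') (xs @ antilexl X @ ys)"
    using flip_block_exists[OF cS XI S'(2)] S'(1) by blast
  have "xs @ lexl X @ ys \<in> Aw n w k" "xs @ antilexl X @ ys \<in> Aw n w k"
    using linext_leR_Aw(1)[OF Cw_subset_Inv[OF SS'(1)] b(1)] linext_leR_Aw(1)[OF Cw_subset_Inv[OF SS'(2)] b(2)]
    by auto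
  moreover have "(xs @ lexl X @ ys, xs @ antilexl X @ ys) \<in> flipstep n w k"
    unfolding flipstep_def using XI by auto
  ultimately have flip: "(xs @ lexl X @ ys, xs @ antilexl X @ ys) \<in> Bw_steps" by blast
  show ?case
  proof (intro ballI)
    fix \<rho> \<sigma> assume \<rho>: "\<rho> \<in> Linext n w k R" and \<sigma>: "\<sigma> \<in> Linext n w k S'"
    have "(\<rho>, xs @ lexl X @ ys) \<in> Bw_steps\<^sup>*" using step.IH \<rho> b(1) unfolding Linext_def by blast
    moreover have "(xs @ antilexl X @ ys, \<sigma>) \<in> Bw_steps\<^sup>*"
      using Linext_Bw_steps[OF SS'(2) _ \<sigma>] b(2) unfolding Linext_def by blast
    ultimately show "(\<rho>, \<sigma>) \<in> Bw_steps\<^sup>*" using flip by (meson rtrancl_into_rtrancl rtrancl_trans)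
  qed
qed

lemma Bw_le_Linext_iff:
  assumes "R \<in> Cw n w (Suc k)" "R' \<in> Cw n w (Suc k)"
  shows "Bw_le n w k (Linext n w k R) (Linext n w k R') \<longleftrightarrow> Cw_le n w (Suc k) R R'"
proof
  assume "Bw_le n w k (Linext n w k R) (Linext n w k R')"
  then obtain \<rho> \<sigma> where \<rho>: "\<rho> \<in> Linext n w k R" and \<sigma>: "\<sigma> \<in> Linext n w k R'"
    and steps: "(\<rho>, \<sigma>) \<in> Bw_steps\<^sup>*"
    unfolding Bw_le_def by blast
  have "(Rev n w k \<rho>, Rev n w k \<sigma>) \<in> Cw_cover\<^sup>*" by (rule Bw_steps_Rev[OF steps])
  then have "(R, R') \<in> Cw_cover\<^sup>*"
    by (simp only: Rev_on_Linext[OF assms(1) \<rho>] Rev_on_Linext[OF assms(2) \<sigma>])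
  then show "Cw_le n w (Suc k) R R'" using assms unfolding Cw_le_def Suc_eq_plus1 by blast
next
  assume "Cw_le n w (Suc k) R R'"
  then have "(R, R') \<in> Cw_cover\<^sup>*" unfolding Cw_le_def Suc_eq_plus1 by blast
  then have steps: "\<forall>\<rho>\<in>Linext n w k R. \<forall>\<sigma>\<in>Linext n w k R'. (\<rho>, \<sigma>) \<in> Bw_steps\<^sup>*"
    by (rule Cw_cover_Bw_steps[OF _ assms(1)])
  obtain \<rho> \<sigma> where "\<rho> \<in> Linext n w k R" "\<sigma> \<in> Linext n w k R'" using Linext_nonempty assms by blast
  then show "Bw_le n w k (Linext n w k R) (Linext n w k R')" using steps unfolding Bw_le_def by blast
qed

end

theorem theorem3p12:
  fixes n k :: nat and w :: "nat \<Rightarrow> nat"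
  assumes "0 < n" and "1 \<le> k" and "k \<le> n" and "w permutes {1..n}"
  shows "(\<forall>c\<in>Bw n w k. \<exists>R. Rev n w k ` c = {R})
    \<and> bij_betw (RevB n w k) (Bw n w k) (Cw n w (k + 1))
    \<and> (\<forall>c\<in>Bw n w k. \<forall>d\<in>Bw n w k.
          Bw_le n w k c d \<longleftrightarrow> Cw_le n w (k + 1) (RevB n w k c) (RevB n w k d))
    \<and> (\<forall>R\<in>Cw n w (k + 1). Linext n w k R \<in> Bw n w k \<and> RevB n w k (Linext n w k R) = R)"
proof -
  interpret perm_setting n k w using assms(2,4) by unfold_locales
  have Bw: "Bw n w k = Linext n w k ` Cw n w (k + 1)" using Bw_eq_Linext_image by simp
  have "\<forall>c\<in>Bw n w k. \<exists>R. Rev n w k ` c = {R}" unfolding Bw using Rev_image_Linext by auto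
  moreover have "bij_betw (RevB n w k) (Bw n w k) (Cw n w (k + 1))" unfolding Bw using bij_betw_RevB by simp
  moreover have "\<forall>c\<in>Bw n w k. \<forall>d\<in>Bw n w k.
      Bw_le n w k c d \<longleftrightarrow> Cw_le n w (k + 1) (RevB n w k c) (RevB n w k d)"
    unfolding Bw using Bw_le_Linext_iff RevB_Linext by auto
  moreover have "\<forall>R\<in>Cw n w (k + 1). Linext n w k R \<in> Bw n w k \<and> RevB n w k (Linext n w k R) = R"
    unfolding Bw using RevB_Linext by auto
  ultimately show ?thesis by blast
qed

end
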